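(* Fix $k\in\mathbb{N}$, positive constants $b_0,b_1,b_2,\lambda_0,\lambda_1$ and $\mu\in(0,1)$. There exists $C>0$ depending only on $b_0,b_1,b_2,\lambda_0,\lambda_1,\mu$ (and the fixed $k$) such that the following holds. Let $T\geq10$, $\ell<r$, $a^\pm\in\mathbb{R}^k$, $g:[\ell,r]\to\mathbb{R}$ Lipschitz with $g(\ell)=g(r)=0$, and $P\subset(\ell,r)$ finite, with $P'=P\cap[\ell+T^{1/2},r-T^{1/2}]$ non-empty. Suppose that $r-\ell\leq b_0T$, $|P|\leq b_0T$, $|g(x)-g(y)|\leq b_1T|x-y|$ for all $x,y$, $a^\pm_j-a^\pm_{j+1}\geq\lambda_0T^{1/2}$ for $j\in\{1,\dots,k-1\}$, $a^-_k-g(\ell)\geq\lambda_1T$, $a^+_k-g(r)\geq\lambda_1T$, $a^-_1-g(\ell)\leq b_2T^2$, $a^+_1-g(r)\leq b_2T^2$. Then $\mathbb{P}_{\mathcal{L}'_+}(\mathsf{G})\geq C^{-1}e^{-CT^{5/2}}$.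
   Context: $\mathbb{P}_{\mathrm{free}}$ is the law of $k$ independent Brownian bridges (diffusion parameter one) $\mathcal{L}=(\mathcal{L}_1,\dots,\mathcal{L}_k)$ on $[\ell,r]$ with $\mathcal{L}_j(\ell)=a^-_j$, $\mathcal{L}_j(r)=a^+_j$. $W'_+(\mathcal{L})=1$ if for all $p\in P'$ one has $\mathcal{L}_k(p)>g(p)$ and $\mathcal{L}_j(p)>\mathcal{L}_{j+1}(p)$ for all $j\in\{1,\dots,k-1\}$, and $0$ otherwise; $\mathbb{P}_{\mathcal{L}'_+}$ is given by $d\mathbb{P}_{\mathcal{L}'_+}/d\mathbb{P}_{\mathrm{free}}=W'_+/\mathbb{E}_{\mathrm{free}}[W'_+]$. $\mathsf{G}$ is the event that $\mathcal{L}_j(p)-\mathcal{L}_{j+1}(p)\geq\frac{1+\mu}{2}\lambda_0T^{1/2}$ for all $p\in P'$ and $j\in\{1,\dots,k-1\}$, and $\mathcal{L}_k(p)-g(p)\geq\frac{1+\mu}{2}\lambda_1T$ for all $p\in P'$. *)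

theory Defs
  imports "HOL-Probability.Probability"
begin

text \<open>All events in the statement
depend only on the values of the curves at the finitely many times in P'. We therefore
describe the free law through its finite-dimensional marginal on the index set
{1..k} x S (S = P'), which is given by the standard Brownian-bridge density: the
product of Gaussian heat kernels along consecutive times, divided by the heat kernel
between the endpoints.\<close>

definition heat_kernel :: "real \<Rightarrow> real \<Rightarrow> real" where
  "heat_kernel t x = exp (- (x ^ 2) / (2 * t)) / sqrt (2 * pi * t)"

definition chain_dens :: "real list \<Rightarrow> real list \<Rightarrow> real" where
  "chain_dens tt vv = (\<Prod>i<length tt - 1. heat_kernel (tt ! Suc i - tt ! i) (vv ! Suc i - vv ! i))"

text \<open>Joint density at the (sorted) times ts in (l,r) of a Brownian bridge with diffusion
parameter one from (l,a) to (r,b).\<close>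
definition bridge_dens :: "real \<Rightarrow> real \<Rightarrow> real \<Rightarrow> real \<Rightarrow> real list \<Rightarrow> (real \<Rightarrow> real) \<Rightarrow> real" where
  "bridge_dens l r a b ts f =
     chain_dens (l # ts @ [r]) (a # map f ts @ [b]) / heat_kernel (r - l) (b - a)"

text \<open>Configurations: y (j,p) is the value of the j-th curve at time p.\<close>
definition config_space :: "nat \<Rightarrow> real set \<Rightarrow> ((nat \<times> real) \<Rightarrow> real) measure" where
  "config_space k S = PiM ({1..k} \<times> S) (\<lambda>_. lborel)"

definition free_dens :: "nat \<Rightarrow> real \<Rightarrow> real \<Rightarrow> (nat \<Rightarrow> real) \<Rightarrow> (nat \<Rightarrow> real) \<Rightarrow> real set
    \<Rightarrow> ((nat \<times> real) \<Rightarrow> real) \<Rightarrow> real" where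
  "free_dens k l r am ap S y =
     (\<Prod>j\<in>{1..k}. bridge_dens l r (am j) (ap j) (sorted_list_of_set S) (\<lambda>t. y (j, t)))"

definition P_free :: "nat \<Rightarrow> real \<Rightarrow> real \<Rightarrow> (nat \<Rightarrow> real) \<Rightarrow> (nat \<Rightarrow> real) \<Rightarrow> real set
    \<Rightarrow> ((nat \<times> real) \<Rightarrow> real) set \<Rightarrow> ennreal" where
  "P_free k l r am ap S E =
     (\<integral>\<^sup>+ y. ennreal (free_dens k l r am ap S y) * indicator E y \<partial>config_space k S)"

definition W_event :: "nat \<Rightarrow> (real \<Rightarrow> real) \<Rightarrow> real set \<Rightarrow> ((nat \<times> real) \<Rightarrow> real) set" where
  "W_event k g S = {y. \<forall>p\<in>S. y (k, p) > g p \<and> (\<forall>j\<in>{1..k-1}. y (j, p) > y (j+1, p))}"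

definition G_event :: "nat \<Rightarrow> real \<Rightarrow> real \<Rightarrow> real \<Rightarrow> real \<Rightarrow> (real \<Rightarrow> real) \<Rightarrow> real set
    \<Rightarrow> ((nat \<times> real) \<Rightarrow> real) set" where
  "G_event k \<mu> lam0 lam1 T g S = {y. \<forall>p\<in>S.
      (\<forall>j\<in>{1..k-1}. y (j, p) - y (j+1, p) \<ge> (1 + \<mu>) / 2 * lam0 * sqrt T)
      \<and> y (k, p) - g p \<ge> (1 + \<mu>) / 2 * lam1 * T}"

definition P_cond :: "nat \<Rightarrow> real \<Rightarrow> real \<Rightarrow> (nat \<Rightarrow> real) \<Rightarrow> (nat \<Rightarrow> real) \<Rightarrow> (real \<Rightarrow> real)
    \<Rightarrow> real set \<Rightarrow> ((nat \<times> real) \<Rightarrow> real) set \<Rightarrow> ennreal" where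
  "P_cond k l r am ap g S E =
     P_free k l r am ap S (E \<inter> W_event k g S) / P_free k l r am ap S (W_event k g S)"

end

theory Submission
  imports Defs
begin

(* Only the values of the curves at the finitely many times of P' enter the events, and there
   P_free has the density of k independent Gaussian chains: a product of heat kernels along
   consecutive times. The normalising constant cancels in P_cond, so P_cond(G) = N(G \<inter> W) / N(W)
   for the unnormalised mass N.

   Confining curve j to a unit box at height of order T^2, ordered like the curves and above g,
   forces non-intersection and costs a factor e^(-O(T^(7/2))) in total, so N(W) is at least of
   that size. A curve whose first or last observed value exceeds its boundary value by more than
   R sqrt t, with R of order T^(7/4) and t the time to the boundary, has Gaussian-small mass, so
   at least half of N(W) remains on W without such overshoots. Lifting curve j by
   lam1 T + (k - j) lam0 sqrt T maps that set into G \<inter> W. By translation invariance of Lebesgue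
   measure only the density changes: the increments between observation times are unchanged, and
   the first and last factors lose at most e^(-O(T^(5/2))) away from overshoots. *)

section \<open>Independent Markov chains on product spaces\<close>

lemma nn_integral_PiM_slice:
  fixes f :: "'a \<Rightarrow> real \<Rightarrow> ennreal" and s :: 'b
  assumes "finite J" and "\<And>j. j \<in> J \<Longrightarrow> f j \<in> borel_measurable borel"
  shows "(\<integral>\<^sup>+w. (\<Prod>j\<in>J. f j (w (j, s))) \<partial>PiM (J \<times> {s}) (\<lambda>_. lborel))
       = (\<Prod>j\<in>J. \<integral>\<^sup>+z. f j z \<partial>lborel)"
proof -
  interpret product_sigma_finite "\<lambda>_::'a \<times> 'b. lborel :: real measure" by standard
  have slice: "J \<times> {s} = (\<lambda>j. (j, s)) ` J" by auto
  have inj: "inj_on (\<lambda>j. (j, s)) J" by (auto simp: inj_on_def)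
  have "(\<integral>\<^sup>+w. (\<Prod>i\<in>J \<times> {s}. f (fst i) (w i)) \<partial>PiM (J \<times> {s}) (\<lambda>_. lborel))
      = (\<Prod>i\<in>J \<times> {s}. \<integral>\<^sup>+z. f (fst i) z \<partial>lborel)"
    using assms by (intro product_nn_integral_prod) auto
  then show ?thesis
    unfolding slice prod.reindex[OF inj] by (simp add: comp_def)
qed

lemma measurable_PiM_extend_slice:
  fixes F :: "('a \<times> 'b \<Rightarrow> real) \<Rightarrow> ennreal"
  assumes F: "F \<in> borel_measurable (PiM I (\<lambda>_. lborel))"
    and F_restrict: "\<And>y. F y = F (restrict y I)"
    and K: "\<And>j. j \<in> J \<Longrightarrow> (\<lambda>(x, z). K j x z) \<in> borel_measurable (PiM I (\<lambda>_. lborel) \<Otimes>\<^sub>M borel)"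
  shows "(\<lambda>y. F y * (\<Prod>j\<in>J. K j (restrict y I) (y (j, s))))
           \<in> borel_measurable (PiM (I \<union> J \<times> {s}) (\<lambda>_. lborel))"
proof -
  let ?N = "PiM (I \<union> J \<times> {s}) (\<lambda>_. lborel :: real measure)"
  have restr: "(\<lambda>y. restrict y I) \<in> measurable ?N (PiM I (\<lambda>_. lborel))"
    by (rule measurable_restrict_subset) auto
  have "(\<lambda>y. F (restrict y I)) \<in> borel_measurable ?N"
    using measurable_comp[OF restr F] by (simp add: comp_def)
  then have "F \<in> borel_measurable ?N"
    by (subst (asm) F_restrict[symmetric]) simp
  moreover have "(\<lambda>y. K j (restrict y I) (y (j, s))) \<in> borel_measurable ?N" if "j \<in> J" for j
  proof (rule measurable_Pair_compose_split[OF K[OF that] restr])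
    show "(\<lambda>y. y (j, s)) \<in> borel_measurable ?N"
      using that by (intro measurable_component_singleton[THEN measurable_compose[where L=borel]]) auto
  qed
  ultimately show ?thesis
    by (intro borel_measurable_times_ennreal borel_measurable_prod_ennreal) auto
qed

lemma nn_integral_PiM_extend_slice:
  fixes F :: "('a \<times> 'b \<Rightarrow> real) \<Rightarrow> ennreal"
  assumes I: "finite I" and J: "finite J" and fresh: "\<And>j. (j, s) \<notin> I"
    and F: "F \<in> borel_measurable (PiM I (\<lambda>_. lborel))"
    and F_restrict: "\<And>y. F y = F (restrict y I)"
    and K: "\<And>j. j \<in> J \<Longrightarrow> (\<lambda>(x, z). K j x z) \<in> borel_measurable (PiM I (\<lambda>_. lborel) \<Otimes>\<^sub>M borel)"
  shows "(\<integral>\<^sup>+y. F y * (\<Prod>j\<in>J. K j (restrict y I) (y (j, s))) \<partial>PiM (I \<union> J \<times> {s}) (\<lambda>_. lborel))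
       = (\<integral>\<^sup>+x. F x * (\<Prod>j\<in>J. \<integral>\<^sup>+z. K j x z \<partial>lborel) \<partial>PiM I (\<lambda>_. lborel))"
proof -
  interpret product_sigma_finite "\<lambda>_::'a \<times> 'b. lborel :: real measure" by standard
  let ?J = "J \<times> {s}"
  have disj: "I \<inter> ?J = {}" using fresh by auto
  have inner: "(\<integral>\<^sup>+w. F (merge I ?J (x, w)) *
          (\<Prod>j\<in>J. K j (restrict (merge I ?J (x, w)) I) (merge I ?J (x, w) (j, s))) \<partial>PiM ?J (\<lambda>_. lborel))
        = F x * (\<Prod>j\<in>J. \<integral>\<^sup>+z. K j x z \<partial>lborel)"
    if x: "x \<in> space (PiM I (\<lambda>_. lborel))" for x
  proof -
    have restr: "restrict (merge I ?J (x, w)) I = x" for w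
      using x by (auto simp: merge_def restrict_def space_PiM PiE_def extensional_def fun_eq_iff)
    have fresh_coord: "merge I ?J (x, w) (j, s) = w (j, s)" if "j \<in> J" for w j
      using fresh that by (auto simp: merge_def)
    have F_merge: "F (merge I ?J (x, w)) = F x" for w
      by (metis F_restrict restr)
    have Kx: "K j x \<in> borel_measurable borel" if "j \<in> J" for j
      using measurable_Pair_compose_split[OF K[OF that] measurable_const[OF x] measurable_ident]
      by simp
    have "(\<integral>\<^sup>+w. F (merge I ?J (x, w)) *
          (\<Prod>j\<in>J. K j (restrict (merge I ?J (x, w)) I) (merge I ?J (x, w) (j, s))) \<partial>PiM ?J (\<lambda>_. lborel))
        = (\<integral>\<^sup>+w. F x * (\<Prod>j\<in>J. K j x (w (j, s))) \<partial>PiM ?J (\<lambda>_. lborel))"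
      by (intro nn_integral_cong arg_cong2[where f = "(*)"] prod.cong) (simp_all add: F_merge restr fresh_coord)
    also have "\<dots> = F x * (\<integral>\<^sup>+w. (\<Prod>j\<in>J. K j x (w (j, s))) \<partial>PiM ?J (\<lambda>_. lborel))"
      using Kx by (intro nn_integral_cmult borel_measurable_prod_ennreal
          measurable_compose[OF measurable_component_singleton]) auto
    also have "\<dots> = F x * (\<Prod>j\<in>J. \<integral>\<^sup>+z. K j x z \<partial>lborel)"
      using nn_integral_PiM_slice[OF J, of "\<lambda>j. K j x" s] Kx by simp
    finally show ?thesis .
  qed
  have "(\<integral>\<^sup>+y. F y * (\<Prod>j\<in>J. K j (restrict y I) (y (j, s))) \<partial>PiM (I \<union> ?J) (\<lambda>_. lborel))
     = (\<integral>\<^sup>+x. (\<integral>\<^sup>+w. F (merge I ?J (x, w)) *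
          (\<Prod>j\<in>J. K j (restrict (merge I ?J (x, w)) I) (merge I ?J (x, w) (j, s))) \<partial>PiM ?J (\<lambda>_. lborel))
        \<partial>PiM I (\<lambda>_. lborel))"
    using J by (intro product_nn_integral_fold[OF disj I] measurable_PiM_extend_slice F F_restrict K) auto
  also have "\<dots> = (\<integral>\<^sup>+x. F x * (\<Prod>j\<in>J. \<integral>\<^sup>+z. K j x z \<partial>lborel) \<partial>PiM I (\<lambda>_. lborel))"
    by (intro nn_integral_cong inner)
  finally show ?thesis .
qed

definition chain_weight :: "'a set \<Rightarrow> 'b list \<Rightarrow> ('a \<Rightarrow> real \<Rightarrow> ennreal)
    \<Rightarrow> ('a \<Rightarrow> nat \<Rightarrow> real \<Rightarrow> real \<Rightarrow> ennreal) \<Rightarrow> nat \<Rightarrow> ('a \<times> 'b \<Rightarrow> real) \<Rightarrow> ennreal" where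
  "chain_weight J ts q K m y =
     (\<Prod>j\<in>J. q j (y (j, ts ! 0)) * (\<Prod>i\<in>{1..<m}. K j i (y (j, ts ! (i - 1))) (y (j, ts ! i))))"

lemma nth_mem_take: "i < m \<Longrightarrow> m \<le> length xs \<Longrightarrow> xs ! i \<in> set (take m xs)"
  using nth_mem[of i "take m xs"] by simp

lemma chain_weight_restrict:
  assumes "1 \<le> m" "m \<le> length ts"
  shows "chain_weight J ts q K m (restrict y (J \<times> set (take m ts))) = chain_weight J ts q K m y"
  unfolding chain_weight_def
proof (intro prod.cong refl arg_cong2[where f = "(*)"])
  fix j i assume "j \<in> J" "i \<in> {1..<m}"
  moreover have "ts ! (i - 1) \<in> set (take m ts)" "ts ! i \<in> set (take m ts)"
    using \<open>i \<in> {1..<m}\<close> assms by (auto intro!: nth_mem_take)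
  ultimately show "K j i (restrict y (J \<times> set (take m ts)) (j, ts ! (i - 1))) (restrict y (J \<times> set (take m ts)) (j, ts ! i))
      = K j i (y (j, ts ! (i - 1))) (y (j, ts ! i))"
    by simp
qed (use assms nth_mem_take[of 0 m ts] in simp)

lemma measurable_chain_weight:
  assumes "1 \<le> m" "m \<le> length ts"
    and q: "\<And>j. q j \<in> borel_measurable borel"
    and K: "\<And>j i. (\<lambda>(x, z). K j i x z) \<in> borel_measurable (borel \<Otimes>\<^sub>M borel)"
  shows "chain_weight J ts q K m \<in> borel_measurable (PiM (J \<times> set (take m ts)) (\<lambda>_. lborel))"
proof -
  let ?M = "PiM (J \<times> set (take m ts)) (\<lambda>_. lborel :: real measure)"
  have coord: "(\<lambda>y. y (j, ts ! i)) \<in> borel_measurable ?M" if "j \<in> J" "i < m" for j i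
    using that assms nth_mem_take[of i m ts]
    by (intro measurable_component_singleton[THEN measurable_compose[where L = borel]]) auto
  show ?thesis unfolding chain_weight_def
  proof (intro borel_measurable_prod_ennreal borel_measurable_times_ennreal)
    fix j assume j: "j \<in> J"
    show "(\<lambda>y. q j (y (j, ts ! 0))) \<in> borel_measurable ?M"
      using measurable_compose[OF coord[OF j] q] assms by simp
    fix i assume "i \<in> {1..<m}"
    then show "(\<lambda>y. K j i (y (j, ts ! (i - 1))) (y (j, ts ! i))) \<in> borel_measurable ?M"
      by (intro measurable_Pair_compose_split[OF K coord[OF j] coord[OF j]]) auto
  qed
qed

lemma chain_weight_Suc:
  assumes "1 \<le> m"
  shows "chain_weight J ts q K (Suc m) y
       = chain_weight J ts q K m y * (\<Prod>j\<in>J. K j m (y (j, ts ! (m - 1))) (y (j, ts ! m)))"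
proof -
  have "{1..<Suc m} = insert m {1..<m}" using assms by auto
  then show ?thesis
    unfolding chain_weight_def prod.distrib[symmetric] by (simp add: mult_ac)
qed

lemma chain_weight_nonzeroD:
  assumes "chain_weight J ts q K m y \<noteq> 0" "finite J" "j \<in> J"
  shows "q j (y (j, ts ! 0)) \<noteq> 0"
    and "i \<in> {1..<m} \<Longrightarrow> K j i (y (j, ts ! (i - 1))) (y (j, ts ! i)) \<noteq> 0"
  using assms unfolding chain_weight_def by (auto simp: prod_zero_iff)

lemma nn_integral_chain_weight_1:
  assumes "ts \<noteq> []" "finite J" "\<And>j. q j \<in> borel_measurable borel"
  shows "(\<integral>\<^sup>+y. chain_weight J ts q K 1 y \<partial>PiM (J \<times> set (take 1 ts)) (\<lambda>_. lborel))
       = (\<Prod>j\<in>J. \<integral>\<^sup>+z. q j z \<partial>lborel)"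
proof -
  have "set (take 1 ts) = {ts ! 0}" using assms by (cases ts) auto
  then show ?thesis
    unfolding chain_weight_def using nn_integral_PiM_slice[of J q "ts ! 0"] assms by simp
qed

lemma nn_integral_chain_weight_Suc:
  assumes ts: "distinct ts" and m: "1 \<le> m" "m < length ts" and J: "finite J"
    and q: "\<And>j. q j \<in> borel_measurable borel"
    and K: "\<And>j i. (\<lambda>(x, z). K j i x z) \<in> borel_measurable (borel \<Otimes>\<^sub>M borel)"
  shows "(\<integral>\<^sup>+y. chain_weight J ts q K (Suc m) y \<partial>PiM (J \<times> set (take (Suc m) ts)) (\<lambda>_. lborel))
       = (\<integral>\<^sup>+x. chain_weight J ts q K m x * (\<Prod>j\<in>J. \<integral>\<^sup>+z. K j m (x (j, ts ! (m - 1))) z \<partial>lborel)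
            \<partial>PiM (J \<times> set (take m ts)) (\<lambda>_. lborel))"
proof -
  let ?I = "J \<times> set (take m ts)"
  have split: "J \<times> set (take (Suc m) ts) = ?I \<union> J \<times> {ts ! m}"
    using m by (auto simp: take_Suc_conv_app_nth)
  have fresh: "ts ! m \<notin> set (take m ts)"
    using ts m distinct_take[OF ts, of "Suc m"] by (simp add: take_Suc_conv_app_nth)
  have prev: "ts ! (m - 1) \<in> set (take m ts)" using m by (intro nth_mem_take) auto
  have Kprev: "(\<lambda>(x, z). K j m (x (j, ts ! (m - 1))) z) \<in> borel_measurable (PiM ?I (\<lambda>_. lborel) \<Otimes>\<^sub>M borel)"
    if "j \<in> J" for j
  proof -
    have "(\<lambda>x. x (j, ts ! (m - 1))) \<in> borel_measurable (PiM ?I (\<lambda>_. lborel))"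
      using prev that by (intro measurable_component_singleton[THEN measurable_compose[where L = borel]]) auto
    then show ?thesis
      using measurable_Pair_compose_split[OF K measurable_compose[OF measurable_fst] measurable_snd]
      by (simp add: case_prod_beta')
  qed
  have "chain_weight J ts q K (Suc m) y = chain_weight J ts q K m y *
      (\<Prod>j\<in>J. (\<lambda>x z. K j m (x (j, ts ! (m - 1))) z) (restrict y ?I) (y (j, ts ! m)))" for y
    unfolding chain_weight_Suc[OF m(1)] using prev by simp
  then have "(\<integral>\<^sup>+y. chain_weight J ts q K (Suc m) y \<partial>PiM (J \<times> set (take (Suc m) ts)) (\<lambda>_. lborel))
      = (\<integral>\<^sup>+y. chain_weight J ts q K m y *
          (\<Prod>j\<in>J. (\<lambda>x z. K j m (x (j, ts ! (m - 1))) z) (restrict y ?I) (y (j, ts ! m)))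
        \<partial>PiM (?I \<union> J \<times> {ts ! m}) (\<lambda>_. lborel))"
    unfolding split by simp
  also have "\<dots> = (\<integral>\<^sup>+x. chain_weight J ts q K m x * (\<Prod>j\<in>J. \<integral>\<^sup>+z. K j m (x (j, ts ! (m - 1))) z \<partial>lborel)
            \<partial>PiM ?I (\<lambda>_. lborel))"
    using m fresh J by (intro nn_integral_PiM_extend_slice measurable_chain_weight q K Kprev)
      (auto simp: chain_weight_restrict)
  finally show ?thesis .
qed

lemma nn_integral_chain_weight_le:
  assumes ts: "distinct ts" and m: "1 \<le> m" "m \<le> length ts" and J: "finite J"
    and q: "\<And>j. q j \<in> borel_measurable borel"
    and K: "\<And>j i. (\<lambda>(x, z). K j i x z) \<in> borel_measurable (borel \<Otimes>\<^sub>M borel)"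
    and K_le_1: "\<And>j i x. (\<integral>\<^sup>+z. K j i x z \<partial>lborel) \<le> 1"
  shows "(\<integral>\<^sup>+y. chain_weight J ts q K m y \<partial>PiM (J \<times> set (take m ts)) (\<lambda>_. lborel))
       \<le> (\<Prod>j\<in>J. \<integral>\<^sup>+z. q j z \<partial>lborel)"
  using m
proof (induction m rule: dec_induct)
  case base
  then have "ts \<noteq> []" by auto
  then show ?case using nn_integral_chain_weight_1[of ts J q K] J q by simp
next
  case (step n)
  have "(\<integral>\<^sup>+y. chain_weight J ts q K (Suc n) y \<partial>PiM (J \<times> set (take (Suc n) ts)) (\<lambda>_. lborel))
      = (\<integral>\<^sup>+x. chain_weight J ts q K n x * (\<Prod>j\<in>J. \<integral>\<^sup>+z. K j n (x (j, ts ! (n - 1))) z \<partial>lborel)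
            \<partial>PiM (J \<times> set (take n ts)) (\<lambda>_. lborel))"
    using step by (intro nn_integral_chain_weight_Suc ts J q K) auto
  also have "\<dots> \<le> (\<integral>\<^sup>+x. chain_weight J ts q K n x * 1 \<partial>PiM (J \<times> set (take n ts)) (\<lambda>_. lborel))"
    by (intro nn_integral_mono mult_left_mono prod_le_1) (auto simp: K_le_1)
  also have "\<dots> \<le> (\<Prod>j\<in>J. \<integral>\<^sup>+z. q j z \<partial>lborel)"
    using step by simp
  finally show ?case .
qed

lemma nn_integral_chain_weight_ge:
  assumes ts: "distinct ts" and m: "1 \<le> m" "m \<le> length ts" and J: "finite J"
    and q: "\<And>j. q j \<in> borel_measurable borel"
    and K: "\<And>j i. (\<lambda>(x, z). K j i x z) \<in> borel_measurable (borel \<Otimes>\<^sub>M borel)"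
    and q_supp: "\<And>j z. q j z \<noteq> 0 \<Longrightarrow> z \<in> B j"
    and K_supp: "\<And>j i x z. K j i x z \<noteq> 0 \<Longrightarrow> z \<in> B j"
    and K_ge: "\<And>j i x. j \<in> J \<Longrightarrow> x \<in> B j \<Longrightarrow> \<beta> \<le> (\<integral>\<^sup>+z. K j i x z \<partial>lborel)"
  shows "(\<Prod>j\<in>J. \<integral>\<^sup>+z. q j z \<partial>lborel) * \<beta> ^ (card J * (m - 1))
       \<le> (\<integral>\<^sup>+y. chain_weight J ts q K m y \<partial>PiM (J \<times> set (take m ts)) (\<lambda>_. lborel))"
  using m
proof (induction m rule: dec_induct)
  case base
  then have "ts \<noteq> []" by auto
  then show ?case using nn_integral_chain_weight_1[of ts J q K] J q by simp
next
  case (step n)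
  let ?M = "PiM (J \<times> set (take n ts)) (\<lambda>_. lborel :: real measure)"
  have last_in_B: "x (j, ts ! (n - 1)) \<in> B j" if "chain_weight J ts q K n x \<noteq> 0" "j \<in> J" for x j
  proof (cases "n = 1")
    case True
    then show ?thesis using q_supp chain_weight_nonzeroD(1)[OF that(1) J that(2)] by simp
  next
    case False
    then show ?thesis
      using K_supp[OF chain_weight_nonzeroD(2)[OF that(1) J that(2), of "n - 1"]] step by simp
  qed
  have transitions: "chain_weight J ts q K n x * \<beta> ^ card J
      \<le> chain_weight J ts q K n x * (\<Prod>j\<in>J. \<integral>\<^sup>+z. K j n (x (j, ts ! (n - 1))) z \<partial>lborel)" for x
  proof (cases "chain_weight J ts q K n x = 0")
    case False
    have "\<beta> ^ card J \<le> (\<Prod>j\<in>J. \<integral>\<^sup>+z. K j n (x (j, ts ! (n - 1))) z \<partial>lborel)"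
      using prod_mono_ennreal[of J "\<lambda>_. \<beta>"] K_ge last_in_B[OF False] by simp
    then show ?thesis by (intro mult_left_mono) auto
  qed simp
  have "card J * (Suc n - 1) = card J * (n - 1) + card J" using step by (cases n) auto
  then have "(\<Prod>j\<in>J. \<integral>\<^sup>+z. q j z \<partial>lborel) * \<beta> ^ (card J * (Suc n - 1))
      = ((\<Prod>j\<in>J. \<integral>\<^sup>+z. q j z \<partial>lborel) * \<beta> ^ (card J * (n - 1))) * \<beta> ^ card J"
    by (simp only: power_add mult_ac)
  also have "\<dots> \<le> (\<integral>\<^sup>+y. chain_weight J ts q K n y \<partial>?M) * \<beta> ^ card J"
    using step by (intro mult_right_mono) auto
  also have "\<dots> = (\<integral>\<^sup>+x. chain_weight J ts q K n x * \<beta> ^ card J \<partial>?M)"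
    using step by (intro nn_integral_multc[symmetric] measurable_chain_weight q K) auto
  also have "\<dots> \<le> (\<integral>\<^sup>+x. chain_weight J ts q K n x *
      (\<Prod>j\<in>J. \<integral>\<^sup>+z. K j n (x (j, ts ! (n - 1))) z \<partial>lborel) \<partial>?M)"
    by (intro nn_integral_mono transitions)
  also have "\<dots> = (\<integral>\<^sup>+y. chain_weight J ts q K (Suc n) y \<partial>PiM (J \<times> set (take (Suc n) ts)) (\<lambda>_. lborel))"
    using step by (intro nn_integral_chain_weight_Suc[symmetric] ts J q K) auto
  finally show ?case .
qed

section \<open>Gaussian kernel estimates\<close>

lemma measurable_heat_kernel [measurable]: "heat_kernel t \<in> borel_measurable borel"
  unfolding heat_kernel_def[abs_def] by measurable

lemma heat_kernel_eq_normal_density: "t > 0 \<Longrightarrow> heat_kernel t (z - x) = normal_density x (sqrt t) z"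
  unfolding heat_kernel_def normal_density_def by (simp add: power2_eq_square[symmetric] field_simps)

lemma heat_kernel_nonneg: "t > 0 \<Longrightarrow> 0 \<le> heat_kernel t x"
  unfolding heat_kernel_def by simp

lemma nn_integral_heat_kernel: "t > 0 \<Longrightarrow> (\<integral>\<^sup>+z. ennreal (heat_kernel t (z - x)) \<partial>lborel) = 1"
  unfolding heat_kernel_eq_normal_density by (subst nn_integral_eq_integral) auto

lemma heat_kernel_le_exp:
  assumes "t \<ge> 1"
  shows "heat_kernel t x \<le> exp (- (x ^ 2) / (2 * t))"
proof -
  have "1 * 1 \<le> (2 * pi) * t" using assms pi_gt3 by (intro mult_mono) auto
  then have "1 \<le> sqrt (2 * pi * t)" by (simp add: real_le_rsqrt)
  then show ?thesis unfolding heat_kernel_def by (simp add: divide_le_eq mult_le_cancel_left1)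
qed

lemma heat_kernel_le_1:
  assumes "t \<ge> 1"
  shows "heat_kernel t x \<le> 1"
proof -
  have "exp (- (x ^ 2) / (2 * t)) \<le> 1" using assms by simp
  then show ?thesis using heat_kernel_le_exp[OF assms, of x] by linarith
qed

lemma heat_kernel_ge:
  assumes "t > 0" "\<bar>x\<bar> \<le> w"
  shows "exp (- (w ^ 2) / (2 * t)) / sqrt (2 * pi * t) \<le> heat_kernel t x"
proof -
  have "x ^ 2 \<le> w ^ 2" using assms by (metis abs_ge_zero order_trans power2_abs power_mono)
  then have "- (w ^ 2) / (2 * t) \<le> - (x ^ 2) / (2 * t)" using assms by (simp add: divide_right_mono)
  then show ?thesis unfolding heat_kernel_def using assms by (intro divide_right_mono) auto
qed

lemma heat_kernel_add:
  assumes "t > 0"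
  shows "heat_kernel t (x + c) = heat_kernel t x * exp (- (2 * x * c + c ^ 2) / (2 * t))"
proof -
  have "exp (- ((x + c) ^ 2) / (2 * t)) = exp (- (x ^ 2) / (2 * t)) * exp (- (2 * x * c + c ^ 2) / (2 * t))"
    unfolding mult_exp_exp using assms by (simp add: power2_eq_square field_simps)
  then show ?thesis unfolding heat_kernel_def by simp
qed

lemma heat_kernel_le_tail:
  assumes t: "t > 0" and d: "0 \<le> d" "d \<le> \<bar>x\<bar>"
  shows "heat_kernel t x \<le> sqrt 2 * exp (- (d ^ 2) / (4 * t)) * heat_kernel (2 * t) x"
proof -
  have "d ^ 2 \<le> x ^ 2"
    using power_mono[OF d(2) d(1), of 2] by simp
  then have "- (x ^ 2) / (2 * t) \<le> - (d ^ 2) / (4 * t) + - (x ^ 2) / (4 * t)"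
    using t by (simp add: field_simps)
  then have "heat_kernel t x \<le> exp (- (d ^ 2) / (4 * t) + - (x ^ 2) / (4 * t)) / sqrt (2 * pi * t)"
    unfolding heat_kernel_def using t by (intro divide_right_mono) auto
  also have "\<dots> = sqrt 2 * exp (- (d ^ 2) / (4 * t)) * heat_kernel (2 * t) x"
  proof -
    have "sqrt (2 * pi * (2 * t)) = sqrt 2 * sqrt (2 * pi * t)"
      by (simp add: real_sqrt_mult[symmetric] mult_ac)
    then show ?thesis unfolding heat_kernel_def exp_add by (simp add: mult_ac)
  qed
  finally show ?thesis .
qed

lemma nn_integral_heat_kernel_tail:
  assumes t: "t > 0" and U: "a \<le> U"
  shows "(\<integral>\<^sup>+z. ennreal (heat_kernel t (z - a)) * indicator {U<..} z \<partial>lborel)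
     \<le> ennreal (sqrt 2 * exp (- ((U - a) ^ 2) / (4 * t)))"
proof -
  let ?c = "sqrt 2 * exp (- ((U - a) ^ 2) / (4 * t))"
  have "ennreal (heat_kernel t (z - a)) * indicator {U<..} z \<le> ennreal ?c * ennreal (heat_kernel (2 * t) (z - a))"
    for z
    using t U heat_kernel_le_tail[of t "U - a" "z - a"]
    by (auto simp: ennreal_mult[symmetric] heat_kernel_nonneg intro!: ennreal_leI split: split_indicator)
  then have "(\<integral>\<^sup>+z. ennreal (heat_kernel t (z - a)) * indicator {U<..} z \<partial>lborel)
      \<le> (\<integral>\<^sup>+z. ennreal ?c * ennreal (heat_kernel (2 * t) (z - a)) \<partial>lborel)"
    by (intro nn_integral_mono)
  also have "\<dots> = ennreal ?c"
    using t by (simp add: nn_integral_cmult nn_integral_heat_kernel)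
  finally show ?thesis .
qed

lemma nn_integral_ge_interval:
  fixes f :: "real \<Rightarrow> real"
  assumes "u \<le> v" "{u..v} \<subseteq> B" "0 \<le> c" "\<And>z. z \<in> {u..v} \<Longrightarrow> c \<le> f z"
  shows "ennreal (c * (v - u)) \<le> (\<integral>\<^sup>+z. ennreal (f z) * indicator B z \<partial>lborel)"
proof -
  have "ennreal (c * (v - u)) = (\<integral>\<^sup>+z. ennreal c * indicator {u..v} z \<partial>lborel)"
    using assms by (simp add: nn_integral_cmult_indicator ennreal_mult)
  also have "\<dots> \<le> (\<integral>\<^sup>+z. ennreal (f z) * indicator B z \<partial>lborel)"
    using assms by (intro nn_integral_mono) (auto intro!: ennreal_leI split: split_indicator)
  finally show ?thesis .
qed

text \<open>An interval of length min (sqrt \<delta>) 1 / 2 with endpoint x fits into the unit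
  interval, and on it the kernel is at least of order \<delta>^(-1/2).\<close>
lemma nn_integral_heat_kernel_unit_interval:
  assumes x: "x \<in> {H..H+1}" and \<delta>: "0 < \<delta>" "\<delta> \<le> D" and D: "1 \<le> D"
  shows "ennreal (exp (- 1 / 2) / (2 * sqrt (2 * pi * D)))
      \<le> (\<integral>\<^sup>+z. ennreal (heat_kernel \<delta> (z - x)) * indicator {H..H+1} z \<partial>lborel)"
proof -
  define w where "w = min (sqrt \<delta>) 1 / 2"
  have w: "0 < w" "w \<le> 1 / 2" "w ^ 2 \<le> \<delta>"
    using \<delta> by (auto simp: w_def min_def power_divide)
  obtain u where u: "{u..u + w} \<subseteq> {H..H+1}" "x \<in> {u, u + w}"
    using x w by (cases "x + w \<le> H + 1") (auto intro!: that[of x] that[of "x - w"])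
  let ?c = "exp (- 1 / 2) / sqrt (2 * pi * \<delta>)"
  have "?c \<le> heat_kernel \<delta> (z - x)" if "z \<in> {u..u + w}" for z
  proof -
    have "?c \<le> exp (- (w ^ 2) / (2 * \<delta>)) / sqrt (2 * pi * \<delta>)"
      using \<delta> w by (intro divide_right_mono) (auto simp: field_simps)
    also have "\<dots> \<le> heat_kernel \<delta> (z - x)"
      using that u \<delta> by (intro heat_kernel_ge) auto
    finally show ?thesis .
  qed
  then have "ennreal (?c * (u + w - u)) \<le> (\<integral>\<^sup>+z. ennreal (heat_kernel \<delta> (z - x)) * indicator {H..H+1} z \<partial>lborel)"
    using u w \<delta> by (intro nn_integral_ge_interval) auto
  moreover have "exp (- 1 / 2) / (2 * sqrt (2 * pi * D)) \<le> ?c * w"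
  proof -
    have "sqrt \<delta> \<le> sqrt D * min (sqrt \<delta>) 1"
      using \<delta> D by (auto simp: min_def mult_le_cancel_left1 intro: order_trans[of _ 1])
    then show ?thesis
      using \<delta> D by (simp add: w_def real_sqrt_mult field_simps)
  qed
  ultimately show ?thesis unfolding add_diff_cancel_left' by (meson ennreal_leI order_trans)
qed

lemma exp_neg_le_inverse_sqrt: "x > 0 \<Longrightarrow> exp (- x) \<le> 1 / sqrt x"
proof -
  assume x: "x > 0"
  have "x \<le> (1 + x) ^ 2" using x by (simp add: power2_eq_square algebra_simps)
  then have "sqrt x \<le> 1 + x" using x by (simp add: real_sqrt_le_iff real_le_lsqrt)
  also have "\<dots> \<le> exp x" by (rule exp_ge_add_one_self)
  finally show ?thesis using x by (simp add: exp_minus field_simps)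
qed

text \<open>With s = T^(1/4): the exponent of heat_kernel_add for a lift by at most \<Phi> T of a
  point at most R0 T^(7/4) sqrt t above the mean, where the variance is t \<ge> sqrt T.\<close>
lemma shift_exponent_bound:
  fixes s t x R0 \<Phi> \<phi> :: real
  assumes s: "s \<ge> 1" and t: "s ^ 2 \<le> t" and x: "x \<le> R0 * s ^ 7 * sqrt t"
    and \<phi>: "0 \<le> \<phi>" "\<phi> \<le> \<Phi> * s ^ 4" and R0: "R0 \<ge> 0"
  shows "(2 * x * \<phi> + \<phi> ^ 2) / (2 * t) \<le> (R0 * \<Phi> + \<Phi> ^ 2 / 2) * s ^ 10"
proof -
  define u where "u = sqrt t"
  have "1 \<le> s ^ 2" using s by (simp add: one_le_power)
  then have u: "s \<le> u" "t = u * u" "0 < u" using t by (auto simp: u_def real_le_rsqrt)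
  have "2 * x * \<phi> \<le> 2 * (R0 * s ^ 7 * u) * \<phi>"
    using x \<phi> by (intro mult_right_mono) (auto simp: u_def)
  then have "2 * x * \<phi> / (2 * t) \<le> 2 * (R0 * s ^ 7 * u) * \<phi> / (2 * t)"
    using u by (intro divide_right_mono) auto
  also have "\<dots> = R0 * s ^ 7 * \<phi> / u"
    unfolding u(2) using u(3) by (simp add: field_simps)
  also have "\<dots> \<le> R0 * s ^ 7 * \<phi> / s"
    using u s \<phi> R0 by (intro divide_left_mono) auto
  also have "\<dots> = R0 * s ^ 6 * \<phi>"
    using s by (simp add: power_Suc2[of s 6, simplified])
  also have "\<dots> \<le> R0 * s ^ 6 * (\<Phi> * s ^ 4)"
    using \<phi> R0 by (intro mult_left_mono) auto
  also have "\<dots> = R0 * \<Phi> * s ^ 10"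
    by (simp add: power_add[symmetric] mult_ac)
  finally have lin: "2 * x * \<phi> / (2 * t) \<le> R0 * \<Phi> * s ^ 10" .
  have "\<phi> ^ 2 / (2 * t) \<le> (\<Phi> * s ^ 4) ^ 2 / (2 * s ^ 2)"
    using \<phi> t s by (intro frac_le power_mono) auto
  also have "(\<Phi> * s ^ 4) ^ 2 = (\<Phi> ^ 2 * s ^ 6) * s ^ 2"
    by (simp add: power_mult_distrib power_mult[symmetric] power_add[symmetric])
  also have "\<Phi> ^ 2 * s ^ 6 * s ^ 2 / (2 * s ^ 2) \<le> \<Phi> ^ 2 * s ^ 10 / 2"
    using s by (simp add: power_increasing mult_left_mono)
  finally have quad: "\<phi> ^ 2 / (2 * t) \<le> \<Phi> ^ 2 * s ^ 10 / 2" .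
  show ?thesis
    using lin quad by (simp add: add_divide_distrib algebra_simps)
qed

lemma heat_kernel_minus: "heat_kernel t (- x) = heat_kernel t x"
  unfolding heat_kernel_def by simp

lemma heat_kernel_shift_ge:
  fixes s t x R0 \<Phi> \<phi> :: real
  assumes s: "s \<ge> 1" and t: "s ^ 2 \<le> t" and x: "x \<le> R0 * s ^ 7 * sqrt t"
    and \<phi>: "0 \<le> \<phi>" "\<phi> \<le> \<Phi> * s ^ 4" and R0: "R0 \<ge> 0"
  shows "exp (- ((R0 * \<Phi> + \<Phi> ^ 2 / 2) * s ^ 10)) * heat_kernel t x \<le> heat_kernel t (x + \<phi>)"
proof -
  have "1 \<le> s ^ 2" using s by (simp add: one_le_power)
  then have t_pos: "t > 0" using t by linarith
  have "- ((R0 * \<Phi> + \<Phi> ^ 2 / 2) * s ^ 10) \<le> - (2 * x * \<phi> + \<phi> ^ 2) / (2 * t)"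
    using shift_exponent_bound[OF assms] unfolding minus_divide_left[symmetric] by linarith
  then have "exp (- ((R0 * \<Phi> + \<Phi> ^ 2 / 2) * s ^ 10)) \<le> exp (- (2 * x * \<phi> + \<phi> ^ 2) / (2 * t))"
    by (simp only: exp_le_cancel_iff)
  then show ?thesis
    unfolding heat_kernel_add[OF t_pos] using heat_kernel_nonneg[OF t_pos, of x]
    by (simp add: mult.commute mult_left_mono)
qed

section \<open>Translation invariance of Lebesgue measure on finite products\<close>

lemma emeasure_lborel_translate:
  fixes c :: real
  assumes "A \<in> sets borel"
  shows "emeasure lborel {x. x + c \<in> A} = emeasure lborel A"
proof -
  have "emeasure lborel A = emeasure (distr lborel borel ((+) c)) A"
    by (simp add: lborel_distr_plus)
  also have "\<dots> = emeasure lborel ((+) c -` A \<inter> space lborel)"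
    using assms by (intro emeasure_distr) auto
  also have "(+) c -` A \<inter> space lborel = {x. x + c \<in> A}" by (auto simp: add.commute)
  finally show ?thesis ..
qed

lemma distr_PiM_lborel_translate:
  fixes h :: "'i \<Rightarrow> real"
  assumes I: "finite I"
  shows "distr (PiM I (\<lambda>_. lborel)) (PiM I (\<lambda>_. lborel)) (\<lambda>y. restrict (\<lambda>i. y i + h i) I)
       = PiM I (\<lambda>_. lborel)"
proof -
  interpret product_sigma_finite "\<lambda>_::'i. lborel :: real measure" by standard
  let ?M = "PiM I (\<lambda>_. lborel :: real measure)" and ?f = "\<lambda>y. restrict (\<lambda>i. y i + h i) I"
  have f: "?f \<in> measurable ?M ?M" by (rule measurable_restrict) simp
  show ?thesis
  proof (rule PiM_eqI[OF I])
    fix A :: "'i \<Rightarrow> real set" assume A: "\<And>i. i \<in> I \<Longrightarrow> A i \<in> sets lborel"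
    have "?f -` PiE I A \<inter> space ?M = PiE I (\<lambda>i. {x. x + h i \<in> A i})"
      by (auto simp: space_PiM PiE_def Pi_def extensional_def)
    moreover have "emeasure ?M (PiE I (\<lambda>i. {x. x + h i \<in> A i})) = (\<Prod>i\<in>I. emeasure lborel {x. x + h i \<in> A i})"
      using A by (intro emeasure_PiM[OF I]) auto
    ultimately have "emeasure (distr ?M ?M ?f) (PiE I A) = (\<Prod>i\<in>I. emeasure lborel {x. x + h i \<in> A i})"
      using A I by (subst emeasure_distr[OF f]) (auto intro: sets_PiM_I_finite)
    also have "\<dots> = (\<Prod>i\<in>I. emeasure lborel (A i))"
      using A by (intro prod.cong refl emeasure_lborel_translate) auto
    finally show "emeasure (distr ?M ?M ?f) (PiE I A) = (\<Prod>i\<in>I. emeasure lborel (A i))" .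
  qed simp
qed

lemma nn_integral_PiM_lborel_translate:
  fixes h :: "'i \<Rightarrow> real"
  assumes "finite I" and F: "F \<in> borel_measurable (PiM I (\<lambda>_. lborel))"
  shows "(\<integral>\<^sup>+y. F (restrict (\<lambda>i. y i + h i) I) \<partial>PiM I (\<lambda>_. lborel)) = (\<integral>\<^sup>+y. F y \<partial>PiM I (\<lambda>_. lborel))"
proof -
  let ?M = "PiM I (\<lambda>_. lborel :: real measure)" and ?f = "\<lambda>y. restrict (\<lambda>i. y i + h i) I"
  have "?f \<in> measurable ?M ?M" by (rule measurable_restrict) simp
  then have "(\<integral>\<^sup>+y. F y \<partial>distr ?M ?M ?f) = (\<integral>\<^sup>+y. F (?f y) \<partial>?M)"
    using F by (intro nn_integral_distr) simp_all
  then show ?thesis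
    unfolding distr_PiM_lborel_translate[OF assms(1)] by simp
qed

section \<open>The bridges observed at the times of P'\<close>

lemma chain_dens_Cons_append:
  assumes "length ts = n" "n \<ge> 1"
  shows "chain_dens (l # ts @ [r]) (a # map f ts @ [b]) =
     heat_kernel (ts ! 0 - l) (f (ts ! 0) - a) *
     (\<Prod>i\<in>{1..<n}. heat_kernel (ts ! i - ts ! (i - 1)) (f (ts ! i) - f (ts ! (i - 1)))) *
     heat_kernel (r - ts ! (n - 1)) (b - f (ts ! (n - 1)))"
proof -
  let ?tt = "l # ts @ [r]" and ?vv = "a # map f ts @ [b]"
  let ?g = "\<lambda>i. heat_kernel (?tt ! Suc i - ?tt ! i) (?vv ! Suc i - ?vv ! i)"
  obtain n' where n': "n = Suc n'" using assms by (cases n) auto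
  have "{..<Suc n} = insert 0 (insert n {1..<n})" using assms by auto
  then have "chain_dens ?tt ?vv = ?g 0 * (\<Prod>i\<in>{1..<n}. ?g i) * ?g n"
    unfolding chain_dens_def using assms by (simp add: mult_ac)
  moreover have "?g i = heat_kernel (ts ! i - ts ! (i - 1)) (f (ts ! i) - f (ts ! (i - 1)))" if "i \<in> {1..<n}" for i
    using that assms by (cases i) (auto simp: nth_append)
  ultimately show ?thesis
    using assms unfolding n' by (simp add: nth_append)
qed

lemma antimono_on_interval:
  fixes f :: "nat \<Rightarrow> 'a::order"
  assumes decr: "\<And>j. 1 \<le> j \<Longrightarrow> j < k \<Longrightarrow> f (Suc j) \<le> f j"
    and "1 \<le> i" "i \<le> j" "j \<le> k"
  shows "f j \<le> f i"
  using assms(3,4)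
proof (induction j rule: dec_induct)
  case (step n)
  then have "f (Suc n) \<le> f n" using assms(2) by (intro decr) auto
  then show ?case using step.IH step.prems by simp
qed simp

lemma inverse_mult_exp_le:
  fixes c x :: real
  assumes "0 \<le> c" "0 \<le> x"
  shows "inverse (2 + c) * exp (- (2 + c) * x) \<le> 1/2 * exp (- (c * x))"
proof (rule mult_mono)
  show "inverse (2 + c) \<le> 1/2" using assms by (simp add: inverse_le_iff_le field_simps)
  show "exp (- (2 + c) * x) \<le> exp (- (c * x))" using assms by (simp add: algebra_simps)
qed auto

locale bridge_constants =
  fixes k :: nat and b0 b1 b2 lam0 lam1 :: real
  assumes k: "k \<ge> 1" and b0: "b0 > 0" and b1: "b1 > 0" and b2: "b2 > 0"
    and lam0: "lam0 > 0" and lam1: "lam1 > 0"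
begin

text \<open>The lift of the curves is at most max_shift T; the confining boxes are within
  box_reach T^2 of the boundary values; confinement costs at most exp (- W_exponent T^(7/2));
  overshoot means exceeding the boundary value by overshoot_radius T^(7/4) sqrt t at variance t;
  the lift costs at most exp (- shift_cost T^(5/2)).\<close>
definition "max_shift = lam1 + real k * lam0"
definition "box_reach = b1 * b0 + b2 + 2 * real k + 2"
definition "W_exponent = real k * (box_reach ^ 2 + 4 * pi * b0 + b0 * (3/2 + 2 * pi) + 2 * pi * b0 ^ 2)"
definition "overshoot_radius = 2 * sqrt (W_exponent + 6 * real k)"
definition "shift_cost = 2 * real k * (overshoot_radius * max_shift + max_shift ^ 2 / 2)"

lemma max_shift_nonneg: "max_shift \<ge> 0"
  unfolding max_shift_def using lam0 lam1 by simp

lemma W_exponent_nonneg: "W_exponent \<ge> 0"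
  unfolding W_exponent_def using b0 by (intro mult_nonneg_nonneg add_nonneg_nonneg) auto

lemma overshoot_radius_nonneg: "overshoot_radius \<ge> 0"
  unfolding overshoot_radius_def using W_exponent_nonneg by simp

lemma shift_cost_nonneg: "shift_cost \<ge> 0"
  unfolding shift_cost_def using overshoot_radius_nonneg max_shift_nonneg by simp

lemma W_exponent_bound:
  fixes s :: real
  assumes "s \<ge> 1"
  shows "2 * real k * (box_reach ^ 2 * s ^ 14 / 2 + 2 * pi * b0 * s ^ 4)
      + real k * (b0 * s ^ 4) * (3/2 + 2 * pi + 2 * pi * b0 * s ^ 4) \<le> W_exponent * s ^ 14"
proof -
  have "s ^ 4 \<le> s ^ 14" "s ^ 8 \<le> s ^ 14" using assms by (auto intro: power_increasing)
  then have "real k * (box_reach ^ 2 * s ^ 14 + 4 * pi * b0 * s ^ 4 + b0 * (3/2 + 2 * pi) * s ^ 4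
        + 2 * pi * b0 ^ 2 * s ^ 8)
      \<le> real k * (box_reach ^ 2 * s ^ 14 + 4 * pi * b0 * s ^ 14 + b0 * (3/2 + 2 * pi) * s ^ 14
        + 2 * pi * b0 ^ 2 * s ^ 14)"
    using b0 by (intro mult_left_mono add_mono order_refl) auto
  then show ?thesis
    unfolding W_exponent_def by (simp add: algebra_simps power2_eq_square power_add[symmetric])
qed

end

locale bridge_setting = bridge_constants +
  fixes T l r :: real and am ap :: "nat \<Rightarrow> real" and g :: "real \<Rightarrow> real" and P :: "real set"
  assumes T: "T \<ge> 10" and lr: "l < r" and finite_P: "finite P"
    and S_nonempty: "P \<inter> {l + sqrt T .. r - sqrt T} \<noteq> {}"
    and gl: "g l = 0" and gr: "g r = 0"
    and rl: "r - l \<le> b0 * T" and card_P: "real (card P) \<le> b0 * T"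
    and lip: "\<forall>x\<in>{l..r}. \<forall>y\<in>{l..r}. \<bar>g x - g y\<bar> \<le> b1 * T * \<bar>x - y\<bar>"
    and sep: "\<forall>j\<in>{1..k-1}. am j - am (j+1) \<ge> lam0 * sqrt T \<and> ap j - ap (j+1) \<ge> lam0 * sqrt T"
    and amk: "am k - g l \<ge> lam1 * T" and apk: "ap k - g r \<ge> lam1 * T"
    and am1: "am 1 - g l \<le> b2 * T ^ 2" and ap1: "ap 1 - g r \<le> b2 * T ^ 2"
begin

definition "S = P \<inter> {l + sqrt T .. r - sqrt T}"
definition "ts = sorted_list_of_set S"
definition "n = length ts"
definition "I = {1..k} \<times> S"
definition "M = PiM I (\<lambda>_. lborel :: real measure)"
definition "t0 = ts ! 0 - l"
definition "tn = r - ts ! (n - 1)"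
text \<open>The junk value 1 outside 1 \<le> i < n keeps every increment a positive variance.\<close>
definition "dl i = (if 1 \<le> i \<and> i < n then ts ! i - ts ! (i - 1) else 1)"
definition "sT = T powr (1/4)"

lemma finite_S: "finite S" unfolding S_def using finite_P by simp
lemma set_ts: "set ts = S" unfolding ts_def using finite_S by simp
lemma distinct_ts: "distinct ts" unfolding ts_def by simp
lemma n_ge_1: "n \<ge> 1"
  using S_nonempty set_ts unfolding S_def n_def by (cases ts) auto
lemma set_take_n: "set (take n ts) = S" unfolding n_def using set_ts by simp
lemma I_eq: "I = {1..k} \<times> set (take n ts)" unfolding I_def set_take_n ..
lemma finite_I: "finite I" unfolding I_def using finite_S by simp
lemma config_space_eq: "config_space k S = M" unfolding config_space_def M_def I_def ..

lemma T_pos: "T > 0" using T by simp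
lemma sqrt_T_ge_1: "sqrt T \<ge> 1" using T by simp
lemma sqrt_T_le: "sqrt T \<le> T"
  using T real_sqrt_le_iff[of T "T ^ 2"] by (simp add: power2_eq_square)

lemma ts_in_S: "i < n \<Longrightarrow> ts ! i \<in> S"
  unfolding n_def using set_ts nth_mem by blast
lemma ts_bounds: "i < n \<Longrightarrow> l + sqrt T \<le> ts ! i \<and> ts ! i \<le> r - sqrt T"
  using ts_in_S unfolding S_def by auto
lemma ts_in_lr: "i < n \<Longrightarrow> l \<le> ts ! i \<and> ts ! i \<le> r"
  using ts_bounds[of i] sqrt_T_ge_1 by linarith
lemma in_I: "j \<in> {1..k} \<Longrightarrow> i < n \<Longrightarrow> (j, ts ! i) \<in> I"
  unfolding I_def using ts_in_S by auto

lemma t0_bounds: "sqrt T \<le> t0" "t0 \<le> b0 * T"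
  using ts_bounds[of 0] ts_in_lr[of 0] n_ge_1 rl unfolding t0_def by auto
lemma tn_bounds: "sqrt T \<le> tn" "tn \<le> b0 * T"
  using ts_bounds[of "n - 1"] ts_in_lr[of "n - 1"] n_ge_1 rl unfolding tn_def by auto
lemma t0_ge_1: "t0 \<ge> 1" using t0_bounds sqrt_T_ge_1 by linarith
lemma tn_ge_1: "tn \<ge> 1" using tn_bounds sqrt_T_ge_1 by linarith
lemma t0_pos: "t0 > 0" using t0_ge_1 by linarith
lemma tn_pos: "tn > 0" using tn_ge_1 by linarith

lemma dl_pos: "dl i > 0"
proof (cases "1 \<le> i \<and> i < n")
  case True
  then have "ts ! (i - 1) < ts ! i"
    using sorted_wrt_nth_less[OF strict_sorted_list_of_set, of "i - 1" i S] unfolding n_def ts_def by simp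
  then show ?thesis using True unfolding dl_def by simp
next
  case False
  then show ?thesis unfolding dl_def by auto
qed

lemma dl_le: "dl i \<le> 1 + b0 * T"
proof (cases "1 \<le> i \<and> i < n")
  case True
  moreover have "i - 1 < n" using True by linarith
  ultimately have "ts ! i - ts ! (i - 1) \<le> r - l" using ts_in_lr[of i] ts_in_lr[of "i - 1"] by simp
  then show ?thesis using True rl unfolding dl_def by simp
next
  case False
  then show ?thesis using b0 T_pos unfolding dl_def by auto
qed

lemma n_le: "real n \<le> b0 * T"
proof -
  have "card S \<le> card P" unfolding S_def using finite_P by (intro card_mono) auto
  then show ?thesis using card_P unfolding n_def ts_def by simp
qed

lemma quarter_root_T:
  obtains s where "s \<ge> 1" "T = s ^ 4" "sqrt T = s ^ 2" "T powr (5/2) = s ^ 10" "sT = s"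
proof
  have "T powr (m * (1/4)) = sT ^ m" for m :: nat
    unfolding sT_def using T_pos by (simp add: powr_realpow[symmetric] powr_powr)
  from this[of 4] this[of 2] this[of 10] show "T = sT ^ 4" "sqrt T = sT ^ 2" "T powr (5/2) = sT ^ 10"
    using T_pos by (simp_all add: powr_half_sqrt)
  show "sT \<ge> 1" unfolding sT_def using T by (intro ge_one_powr_ge_zero) auto
qed simp

lemma boundary_values_bounds:
  assumes "a = am \<or> a = ap" "j \<in> {1..k}"
  shows "0 < a j" "a j \<le> b2 * T ^ 2"
proof -
  have decr: "a (Suc i) \<le> a i" if "1 \<le> i" "i < k" for i
  proof -
    have "i \<in> {1..k-1}" using that by simp
    then show ?thesis using sep assms(1) lam0 sqrt_T_ge_1 by (smt (verit) Suc_eq_plus1 mult_pos_pos)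
  qed
  have "a k \<le> a j" "a j \<le> a 1"
    using assms(2) by (auto intro: antimono_on_interval[where f = a and k = k, OF decr])
  moreover have "lam1 * T > 0" using lam1 T_pos by simp
  then have "a k > 0" "a 1 \<le> b2 * T ^ 2"
    using assms(1) amk apk am1 ap1 gl gr by auto
  ultimately show "0 < a j" "a j \<le> b2 * T ^ 2" by auto
qed

lemma g_bound: "p \<in> {l..r} \<Longrightarrow> \<bar>g p\<bar> \<le> b1 * b0 * T ^ 2"
proof -
  assume p: "p \<in> {l..r}"
  have "\<bar>g p - g l\<bar> \<le> b1 * T * \<bar>p - l\<bar>" using p lr by (intro lip[rule_format]) auto
  also have "\<dots> \<le> b1 * T * (b0 * T)" using p rl b1 T_pos by (intro mult_left_mono) auto
  finally show ?thesis using gl by (simp add: power2_eq_square mult_ac)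
qed

definition "curve_weight j y = chain_dens (l # ts @ [r]) (am j # map (\<lambda>t. y (j, t)) ts @ [ap j])"
definition "weight y = (\<Prod>j\<in>{1..k}. curve_weight j y)"
definition "entry_factor j y = heat_kernel t0 (y (j, ts ! 0) - am j)"
definition "inner_factor j y = (\<Prod>i\<in>{1..<n}. heat_kernel (dl i) (y (j, ts ! i) - y (j, ts ! (i - 1))))"
definition "exit_factor j y = heat_kernel tn (ap j - y (j, ts ! (n - 1)))"
definition "open_weight y = (\<Prod>j\<in>{1..k}. entry_factor j y * inner_factor j y)"
definition "exit_weight y = (\<Prod>j\<in>{1..k}. exit_factor j y)"

definition "mass X = (\<integral>\<^sup>+y. ennreal (weight y) * indicator X y \<partial>M)"

lemma curve_weight_split: "curve_weight j y = entry_factor j y * inner_factor j y * exit_factor j y"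
proof -
  have "(\<Prod>i\<in>{1..<n}. heat_kernel (ts ! i - ts ! (i - 1)) (y (j, ts ! i) - y (j, ts ! (i - 1))))
      = inner_factor j y"
    unfolding inner_factor_def by (intro prod.cong refl) (simp add: dl_def)
  then show ?thesis
    unfolding curve_weight_def entry_factor_def exit_factor_def t0_def tn_def
    using chain_dens_Cons_append[of ts n l r "am j" "\<lambda>t. y (j, t)" "ap j"] n_ge_1 n_def by simp
qed

lemma weight_split: "weight y = open_weight y * exit_weight y"
  unfolding weight_def open_weight_def exit_weight_def prod.distrib[symmetric] curve_weight_split ..

lemma entry_factor_nonneg: "entry_factor j y \<ge> 0"
  unfolding entry_factor_def using t0_pos by (rule heat_kernel_nonneg)
lemma exit_factor_nonneg: "exit_factor j y \<ge> 0"
  unfolding exit_factor_def using tn_pos by (rule heat_kernel_nonneg)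
lemma inner_factor_nonneg: "inner_factor j y \<ge> 0"
  unfolding inner_factor_def using dl_pos by (intro prod_nonneg heat_kernel_nonneg) auto
lemma open_weight_nonneg: "open_weight y \<ge> 0"
  unfolding open_weight_def by (intro prod_nonneg mult_nonneg_nonneg entry_factor_nonneg inner_factor_nonneg)
lemma exit_weight_nonneg: "exit_weight y \<ge> 0"
  unfolding exit_weight_def by (intro prod_nonneg exit_factor_nonneg)
lemma exit_factor_le_1: "exit_factor j y \<le> 1"
  unfolding exit_factor_def using tn_ge_1 by (rule heat_kernel_le_1)
lemma exit_weight_le_1: "exit_weight y \<le> 1"
  unfolding exit_weight_def using exit_factor_nonneg exit_factor_le_1 by (intro prod_le_1) auto
lemma weight_nonneg: "weight y \<ge> 0"
  unfolding weight_split using open_weight_nonneg exit_weight_nonneg by simp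
lemma weight_le_open_weight: "weight y \<le> open_weight y"
  unfolding weight_split using open_weight_nonneg exit_weight_nonneg exit_weight_le_1
  by (simp add: mult_left_le)

lemma measurable_coord: "j \<in> {1..k} \<Longrightarrow> i < n \<Longrightarrow> (\<lambda>y. y (j, ts ! i)) \<in> borel_measurable M"
  unfolding M_def using in_I
  by (intro measurable_component_singleton[THEN measurable_compose[where L = borel]]) auto

lemma measurable_open_weight: "open_weight \<in> borel_measurable M"
  unfolding open_weight_def entry_factor_def inner_factor_def using n_ge_1
  by (intro borel_measurable_prod borel_measurable_times borel_measurable_diff measurable_coord
      measurable_compose[OF _ measurable_heat_kernel]) auto

lemma measurable_exit_weight: "exit_weight \<in> borel_measurable M"
  unfolding exit_weight_def exit_factor_def using n_ge_1
  by (intro borel_measurable_prod borel_measurable_diff measurable_coord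
      measurable_compose[OF _ measurable_heat_kernel]) auto

lemma measurable_weight [measurable]: "weight \<in> borel_measurable M"
  unfolding weight_split[abs_def] using measurable_open_weight measurable_exit_weight by measurable

definition "q_free j z = ennreal (heat_kernel t0 (z - am j))"
definition "K_free j i x z = ennreal (heat_kernel (dl i) (z - x))"

lemma measurable_q_free: "q_free j \<in> borel_measurable borel"
  unfolding q_free_def by measurable
lemma measurable_K_free: "(\<lambda>(x, z). K_free j i x z) \<in> borel_measurable (borel \<Otimes>\<^sub>M borel)"
  unfolding K_free_def by measurable

lemma chain_weight_free: "chain_weight {1..k} ts q_free K_free n y = ennreal (open_weight y)"
proof -
  have "chain_weight {1..k} ts q_free K_free n y = (\<Prod>j\<in>{1..k}. ennreal (entry_factor j y) * ennreal (inner_factor j y))"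
    unfolding chain_weight_def q_free_def K_free_def entry_factor_def inner_factor_def
    using dl_pos by (subst prod_ennreal) (auto intro!: heat_kernel_nonneg)
  also have "\<dots> = (\<Prod>j\<in>{1..k}. ennreal (entry_factor j y * inner_factor j y))"
    by (intro prod.cong refl) (simp add: ennreal_mult entry_factor_nonneg inner_factor_nonneg)
  also have "\<dots> = ennreal (open_weight y)"
    unfolding open_weight_def using entry_factor_nonneg inner_factor_nonneg
    by (intro prod_ennreal mult_nonneg_nonneg)
  finally show ?thesis .
qed

lemma nn_integral_open_weight_le_1: "(\<integral>\<^sup>+y. ennreal (open_weight y) \<partial>M) \<le> 1"
proof -
  have "(\<integral>\<^sup>+y. ennreal (open_weight y) \<partial>M)
      = (\<integral>\<^sup>+y. chain_weight {1..k} ts q_free K_free n y \<partial>PiM ({1..k} \<times> set (take n ts)) (\<lambda>_. lborel))"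
    unfolding chain_weight_free M_def I_eq ..
  also have "\<dots> \<le> (\<Prod>j\<in>{1..k}. \<integral>\<^sup>+z. q_free j z \<partial>lborel)"
    using n_ge_1 distinct_ts measurable_q_free measurable_K_free dl_pos
    by (intro nn_integral_chain_weight_le) (auto simp: n_def K_free_def nn_integral_heat_kernel)
  also have "\<dots> = 1"
    using t0_pos by (simp add: q_free_def nn_integral_heat_kernel)
  finally show ?thesis .
qed

lemma mass_le_1: "mass X \<le> 1"
proof -
  have "mass X \<le> (\<integral>\<^sup>+y. ennreal (open_weight y) \<partial>M)"
    unfolding mass_def using weight_le_open_weight
    by (intro nn_integral_mono) (auto simp: ennreal_leI split: split_indicator)
  then show ?thesis using nn_integral_open_weight_le_1 by (rule order_trans)
qed

lemma measurable_weight_indicator: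
  "Measurable.pred M (\<lambda>y. y \<in> X) \<Longrightarrow> (\<lambda>y. ennreal (weight y) * indicator X y) \<in> borel_measurable M"
  by (measurable, simp add: pred_def)

subsection \<open>Confinement to boxes\<close>

text \<open>Disjoint unit boxes, ordered like the curves and lying above the maximum of |g|:
  curves staying in their boxes at all times of S are non-intersecting above g.\<close>
definition "box_level j = b1 * b0 * T ^ 2 + 1 + 2 * (real k - real j)"
definition "level_box j = {box_level j .. box_level j + 1}"
definition "q_box j z = q_free j z * indicator (level_box j) z"
definition "K_box j i x z = K_free j i x z * indicator (level_box j) z"
definition "gauss_floor t = exp (- ((box_reach * T ^ 2) ^ 2) / (2 * t)) / sqrt (2 * pi * t)"
definition "box_transition_floor = exp (- 1 / 2) / (2 * sqrt (2 * pi * (1 + b0 * T)))"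

lemma box_dist:
  assumes j: "j \<in> {1..k}" and z: "z \<in> level_box j"
  shows "\<bar>z - am j\<bar> \<le> box_reach * T ^ 2" "\<bar>ap j - z\<bar> \<le> box_reach * T ^ 2"
proof -
  have T2: "1 \<le> T ^ 2" using T by (simp add: one_le_power)
  have "0 \<le> b1 * b0 * T ^ 2" "0 \<le> b2 * T ^ 2" using b0 b1 b2 by auto
  moreover have "2 * real k + 2 \<le> (2 * real k + 2) * T ^ 2" using T2 by simp
  moreover have "b1 * b0 * T ^ 2 + 1 \<le> z" "z \<le> b1 * b0 * T ^ 2 + 2 * real k + 2"
    using j z unfolding level_box_def box_level_def by auto
  moreover have "0 < am j" "am j \<le> b2 * T ^ 2" "0 < ap j" "ap j \<le> b2 * T ^ 2"
    using boundary_values_bounds[OF _ j] by blast+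
  moreover have "box_reach * T ^ 2 = b1 * b0 * T ^ 2 + b2 * T ^ 2 + (2 * real k + 2) * T ^ 2"
    unfolding box_reach_def by (simp add: algebra_simps)
  ultimately show "\<bar>z - am j\<bar> \<le> box_reach * T ^ 2" "\<bar>ap j - z\<bar> \<le> box_reach * T ^ 2"
    by linarith+
qed

lemma boxes_in_W:
  assumes "\<And>j i. j \<in> {1..k} \<Longrightarrow> i < n \<Longrightarrow> y (j, ts ! i) \<in> level_box j"
  shows "y \<in> W_event k g S"
  unfolding W_event_def
proof (intro CollectI ballI conjI)
  fix p assume "p \<in> S"
  then obtain i where i: "i < n" "p = ts ! i" using set_ts unfolding n_def by (metis in_set_conv_nth)
  have "p \<in> {l..r}" using ts_in_lr[OF i(1)] i by auto
  moreover have "y (k, p) \<ge> b1 * b0 * T ^ 2 + 1"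
    using assms[of k i] i k unfolding level_box_def box_level_def by auto
  ultimately show "y (k, p) > g p" using g_bound by fastforce
  fix j assume "j \<in> {1..k-1}"
  then have "y (j, p) \<ge> box_level j" "y (j+1, p) \<le> box_level (j+1) + 1"
    using assms[of j i] assms[of "j+1" i] i unfolding level_box_def by auto
  then show "y (j, p) > y (j+1, p)" unfolding box_level_def by simp
qed

lemma measurable_q_box: "q_box j \<in> borel_measurable borel"
  unfolding q_box_def level_box_def using measurable_q_free by measurable
lemma measurable_K_box: "(\<lambda>(x, z). K_box j i x z) \<in> borel_measurable (borel \<Otimes>\<^sub>M borel)"
  unfolding K_box_def level_box_def using measurable_K_free by measurable

lemma nn_integral_q_box_ge: "j \<in> {1..k} \<Longrightarrow> ennreal (gauss_floor t0) \<le> (\<integral>\<^sup>+z. q_box j z \<partial>lborel)"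
  using nn_integral_ge_interval[of "box_level j" "box_level j + 1" "level_box j" "gauss_floor t0" "\<lambda>z. heat_kernel t0 (z - am j)"]
    box_dist t0_pos heat_kernel_ge
  unfolding q_box_def q_free_def gauss_floor_def level_box_def by (fastforce simp: ennreal_leI)

lemma nn_integral_K_box_ge: "x \<in> level_box j \<Longrightarrow> ennreal box_transition_floor \<le> (\<integral>\<^sup>+z. K_box j i x z \<partial>lborel)"
  unfolding K_box_def K_free_def level_box_def box_transition_floor_def
  using dl_pos dl_le b0 T_pos by (intro nn_integral_heat_kernel_unit_interval) auto

lemma chain_weight_box_le:
  "chain_weight {1..k} ts q_box K_box n y * ennreal (gauss_floor tn ^ k)
     \<le> ennreal (weight y) * indicator (W_event k g S) y"
proof (cases "chain_weight {1..k} ts q_box K_box n y = 0")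
  case False
  have in_box: "y (j, ts ! i) \<in> level_box j" if j: "j \<in> {1..k}" and i: "i < n" for j i
  proof (cases "i = 0")
    case True
    then show ?thesis using chain_weight_nonzeroD(1)[OF False _ j]
      unfolding q_box_def by (auto split: split_indicator_asm)
  next
    case False
    then show ?thesis using chain_weight_nonzeroD(2)[OF \<open>chain_weight _ _ _ _ _ _ \<noteq> 0\<close> _ j, of i] i
      unfolding K_box_def by (auto split: split_indicator_asm)
  qed
  have "chain_weight {1..k} ts q_box K_box n y = chain_weight {1..k} ts q_free K_free n y"
    unfolding chain_weight_def q_box_def K_box_def using in_box n_ge_1
    by (intro prod.cong refl arg_cong2[where f = "(*)"]) auto
  also have "\<dots> = ennreal (open_weight y)" by (rule chain_weight_free)
  finally have open_eq: "chain_weight {1..k} ts q_box K_box n y = ennreal (open_weight y)" .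
  have "gauss_floor tn ^ k = (\<Prod>j\<in>{1..k}. gauss_floor tn)" by simp
  also have "\<dots> \<le> exit_weight y"
    unfolding exit_weight_def exit_factor_def gauss_floor_def
    using box_dist(2) in_box n_ge_1 tn_pos by (intro prod_mono conjI heat_kernel_ge) auto
  finally have "open_weight y * gauss_floor tn ^ k \<le> weight y"
    unfolding weight_split using open_weight_nonneg by (intro mult_left_mono)
  moreover have "gauss_floor tn \<ge> 0" unfolding gauss_floor_def using tn_pos by simp
  ultimately show ?thesis
    unfolding open_eq using boxes_in_W[OF in_box] open_weight_nonneg by (simp add: ennreal_mult[symmetric] ennreal_leI)
qed simp

lemma mass_W_ge_product:
  "ennreal (gauss_floor t0 ^ k * box_transition_floor ^ (k * (n - 1)) * gauss_floor tn ^ k) \<le> mass (W_event k g S)"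
proof -
  have nonneg: "gauss_floor t0 \<ge> 0" "box_transition_floor \<ge> 0" "gauss_floor tn \<ge> 0"
    unfolding gauss_floor_def box_transition_floor_def using t0_pos tn_pos b0 T_pos by auto
  have "ennreal (gauss_floor t0 ^ k) = (\<Prod>j\<in>{1..k}. ennreal (gauss_floor t0))"
    using nonneg by (simp add: ennreal_power)
  also have "\<dots> \<le> (\<Prod>j\<in>{1..k}. \<integral>\<^sup>+z. q_box j z \<partial>lborel)"
    by (intro prod_mono_ennreal nn_integral_q_box_ge)
  moreover have supp: "q_box j z \<noteq> 0 \<Longrightarrow> z \<in> level_box j" "K_box j i x z \<noteq> 0 \<Longrightarrow> z \<in> level_box j"
    for j i x z by (auto simp: q_box_def K_box_def split: split_indicator_asm)
  moreover have "(\<Prod>j\<in>{1..k}. \<integral>\<^sup>+z. q_box j z \<partial>lborel) * ennreal box_transition_floor ^ (card {1..k} * (n - 1))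
      \<le> (\<integral>\<^sup>+y. chain_weight {1..k} ts q_box K_box n y \<partial>M)"
    unfolding M_def I_eq
    using n_ge_1 distinct_ts measurable_q_box measurable_K_box nn_integral_K_box_ge supp
    by (intro nn_integral_chain_weight_ge[where B = level_box]) (auto simp: n_def)
  ultimately have "ennreal (gauss_floor t0 ^ k) * ennreal box_transition_floor ^ (k * (n - 1))
      \<le> (\<integral>\<^sup>+y. chain_weight {1..k} ts q_box K_box n y \<partial>M)"
    by (auto intro: order_trans[OF mult_right_mono] simp del: prod_constant)
  then have "ennreal (gauss_floor t0 ^ k * box_transition_floor ^ (k * (n - 1)) * gauss_floor tn ^ k)
      \<le> (\<integral>\<^sup>+y. chain_weight {1..k} ts q_box K_box n y \<partial>M) * ennreal (gauss_floor tn ^ k)"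
    using nonneg by (simp add: ennreal_mult ennreal_power mult_right_mono)
  also have "\<dots> = (\<integral>\<^sup>+y. chain_weight {1..k} ts q_box K_box n y * ennreal (gauss_floor tn ^ k) \<partial>M)"
    unfolding M_def I_eq using n_ge_1 measurable_q_box measurable_K_box
    by (intro nn_integral_multc[symmetric] measurable_chain_weight) (auto simp: n_def)
  also have "\<dots> \<le> mass (W_event k g S)"
    unfolding mass_def by (intro nn_integral_mono chain_weight_box_le)
  finally show ?thesis .
qed

lemma gauss_floor_ge:
  assumes "sqrt T \<le> t" "t \<le> b0 * T"
  shows "exp (- (box_reach ^ 2 * sT ^ 14 / 2 + 2 * pi * b0 * sT ^ 4)) \<le> gauss_floor t"
proof -
  obtain s where s: "s \<ge> 1" "T = s ^ 4" "sqrt T = s ^ 2" "sT = s" by (rule quarter_root_T)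
  have "t > 0" using assms(1) sqrt_T_ge_1 by linarith
  then have t: "s ^ 2 \<le> t" "t \<le> b0 * s ^ 4" "t > 0" using assms s by auto
  have "(box_reach * T ^ 2) ^ 2 / (2 * t) \<le> (box_reach * T ^ 2) ^ 2 / (2 * s ^ 2)"
    using t s by (intro divide_left_mono) auto
  also have "\<dots> = box_reach ^ 2 * s ^ 14 / 2"
    unfolding s(2) using s(1) by (simp add: power_mult_distrib power_mult[symmetric] field_simps)
  finally have "exp (- (box_reach ^ 2 * s ^ 14 / 2)) \<le> exp (- ((box_reach * T ^ 2) ^ 2) / (2 * t))"
    by simp
  moreover have "exp (- (2 * pi * b0 * s ^ 4)) \<le> 1 / sqrt (2 * pi * t)"
    using t exp_neg_le_inverse_sqrt[of "2 * pi * t"] by (simp add: order_trans[rotated])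
  ultimately have "exp (- (box_reach ^ 2 * s ^ 14 / 2)) * exp (- (2 * pi * b0 * s ^ 4))
      \<le> exp (- ((box_reach * T ^ 2) ^ 2) / (2 * t)) * (1 / sqrt (2 * pi * t))"
    by (intro mult_mono) auto
  then show ?thesis unfolding gauss_floor_def s(4) mult_exp_exp by simp
qed

lemma box_transition_floor_ge: "exp (- (3/2 + 2 * pi + 2 * pi * b0 * sT ^ 4)) \<le> box_transition_floor"
proof -
  obtain s where s: "T = s ^ 4" "sT = s" by (rule quarter_root_T)
  have pos: "2 * pi * (1 + b0 * T) > 0" using b0 T_pos by (simp add: add_pos_pos)
  have half: "exp (- 1) \<le> (1::real) / 2"
    using exp_ge_add_one_self[of 1] by (simp add: exp_minus field_simps)
  have "exp (- (3/2 + 2 * pi + 2 * pi * b0 * sT ^ 4))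
      = exp (- 1 / 2) * exp (- 1) * exp (- (2 * pi * (1 + b0 * T)))"
    unfolding s(2) s(1)[symmetric] by (simp add: mult_exp_exp algebra_simps)
  also have "\<dots> \<le> exp (- 1 / 2) * (1 / 2) * (1 / sqrt (2 * pi * (1 + b0 * T)))"
    using half exp_neg_le_inverse_sqrt[OF pos] by (intro mult_mono) auto
  also have "\<dots> = box_transition_floor" unfolding box_transition_floor_def by simp
  finally show ?thesis .
qed

lemma mass_W_ge: "ennreal (exp (- (W_exponent * sT ^ 14))) \<le> mass (W_event k g S)"
proof -
  obtain s where s: "s \<ge> 1" "T = s ^ 4" "sT = s" by (rule quarter_root_T)
  define a where "a = box_reach ^ 2 * s ^ 14 / 2 + 2 * pi * b0 * s ^ 4"
  define b where "b = 3/2 + 2 * pi + 2 * pi * b0 * s ^ 4"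
  have floors: "exp (- a) \<le> gauss_floor t0" "exp (- a) \<le> gauss_floor tn" "exp (- b) \<le> box_transition_floor"
    using gauss_floor_ge t0_bounds tn_bounds box_transition_floor_ge unfolding a_def b_def s(3) by auto
  have "real (n - 1) \<le> b0 * s ^ 4" using n_le n_ge_1 s(2) by (simp add: of_nat_diff)
  then have "real k * real (n - 1) \<le> real k * (b0 * s ^ 4)" by (rule mult_left_mono) simp
  moreover have "b \<ge> 0" unfolding b_def using b0 by simp
  ultimately have "real (k * (n - 1)) * b \<le> real k * (b0 * s ^ 4) * b"
    by (simp add: mult_right_mono)
  then have "exp (- (W_exponent * s ^ 14)) \<le> exp (- (real k * a + real (k * (n - 1)) * b + real k * a))"
    using W_exponent_bound[OF s(1)] unfolding a_def b_def by simp
  also have "\<dots> = exp (- a) ^ k * exp (- b) ^ (k * (n - 1)) * exp (- a) ^ k"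
    by (simp add: exp_of_nat_mult[symmetric] mult_exp_exp)
  also have "\<dots> \<le> gauss_floor t0 ^ k * box_transition_floor ^ (k * (n - 1)) * gauss_floor tn ^ k"
  proof -
    have "0 \<le> gauss_floor t0" "0 \<le> box_transition_floor" using floors by (auto intro: order_trans[OF exp_ge_zero])
    then show ?thesis using floors by (intro mult_mono power_mono) auto
  qed
  finally show ?thesis
    unfolding s(3) using mass_W_ge_product by (meson ennreal_leI order_trans)
qed

subsection \<open>Overshoots at the first and last observation\<close>

definition "R = overshoot_radius * sT ^ 7"
definition "overshoot_entry j = {y. y (j, ts ! 0) > am j + R * sqrt t0}"
definition "overshoot_exit j = {y. y (j, ts ! (n - 1)) > ap j + R * sqrt tn}"
definition "W_no_overshoot = W_event k g S \<inter>
   {y. \<forall>j\<in>{1..k}. y (j, ts ! 0) \<le> am j + R * sqrt t0 \<and> y (j, ts ! (n - 1)) \<le> ap j + R * sqrt tn}"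

lemma R_nonneg: "R \<ge> 0"
proof -
  obtain s where "s \<ge> 1" "sT = s" by (rule quarter_root_T)
  then show ?thesis unfolding R_def using overshoot_radius_nonneg by simp
qed

lemma pred_W: "Measurable.pred M (\<lambda>y. y \<in> W_event k g S)"
  unfolding W_event_def M_def I_def using finite_S k
  by simp (intro pred_intros_finite pred_intros_logic; auto; measurable)

lemma pred_G: "Measurable.pred M (\<lambda>y. y \<in> G_event k mu lam0 lam1 T g S)"
  unfolding G_event_def M_def I_def using finite_S k
  by simp (intro pred_intros_finite pred_intros_logic; auto; measurable)

lemma pred_overshoot:
  assumes "j \<in> {1..k}"
  shows "Measurable.pred M (\<lambda>y. y \<in> overshoot_entry j)" "Measurable.pred M (\<lambda>y. y \<in> overshoot_exit j)"
proof -
  have "0 < n" "n - 1 < n" using n_ge_1 by auto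
  note [measurable] = measurable_coord[OF assms this(1)] measurable_coord[OF assms this(2)]
  show "Measurable.pred M (\<lambda>y. y \<in> overshoot_entry j)" "Measurable.pred M (\<lambda>y. y \<in> overshoot_exit j)"
    unfolding overshoot_entry_def overshoot_exit_def by measurable
qed

lemma pred_W_no_overshoot: "Measurable.pred M (\<lambda>y. y \<in> W_no_overshoot)"
proof -
  have "Measurable.pred M (\<lambda>y. \<forall>j\<in>{1..k}. \<not> y \<in> overshoot_entry j \<and> \<not> y \<in> overshoot_exit j)"
    using pred_overshoot by (intro pred_intros_finite pred_intros_logic) auto
  then show ?thesis
    unfolding W_no_overshoot_def using pred_W by (simp add: overshoot_entry_def overshoot_exit_def not_less)
qed

lemma mass_overshoot_entry_le:
  assumes j0: "j0 \<in> {1..k}"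
  shows "mass (overshoot_entry j0) \<le> ennreal (sqrt 2 * exp (- (R ^ 2) / 4))"
proof -
  define U where "U = am j0 + R * sqrt t0"
  define q where "q j z = (if j = j0 then q_free j z * indicator {U<..} z else q_free j z)" for j z
  have q_meas: "q j \<in> borel_measurable borel" for j
    unfolding q_def using measurable_q_free by measurable
  have "ennreal (weight y) * indicator (overshoot_entry j0) y \<le> chain_weight {1..k} ts q K_free n y" for y
  proof -
    let ?A = "\<lambda>j. q_free j (y (j, ts ! 0)) * (\<Prod>i\<in>{1..<n}. K_free j i (y (j, ts ! (i - 1))) (y (j, ts ! i)))"
    have "chain_weight {1..k} ts q K_free n y
        = (\<Prod>j\<in>{1..k}. ?A j * (if j = j0 then indicator {U<..} (y (j0, ts ! 0)) else 1))"
      unfolding chain_weight_def q_def by (intro prod.cong refl) (auto simp: mult_ac)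
    also have "\<dots> = (\<Prod>j\<in>{1..k}. ?A j) * (\<Prod>j\<in>{1..k}. if j = j0 then indicator {U<..} (y (j0, ts ! 0)) else 1)"
      by (rule prod.distrib)
    also have "\<dots> = ennreal (open_weight y) * indicator (overshoot_entry j0) y"
      using chain_weight_free[of y] j0
      unfolding chain_weight_def by (simp add: prod.delta overshoot_entry_def U_def indicator_def)
    finally show ?thesis
      using weight_le_open_weight by (auto simp: ennreal_leI split: split_indicator)
  qed
  then have "mass (overshoot_entry j0) \<le> (\<integral>\<^sup>+y. chain_weight {1..k} ts q K_free n y \<partial>M)"
    unfolding mass_def by (intro nn_integral_mono)
  also have "\<dots> \<le> (\<Prod>j\<in>{1..k}. \<integral>\<^sup>+z. q j z \<partial>lborel)"
    unfolding M_def I_eq using n_ge_1 distinct_ts q_meas measurable_K_free dl_pos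
    by (intro nn_integral_chain_weight_le) (auto simp: n_def K_free_def nn_integral_heat_kernel)
  also have "\<dots> = (\<Prod>j\<in>{1..k}. if j = j0 then (\<integral>\<^sup>+z. q_free j0 z * indicator {U<..} z \<partial>lborel) else 1)"
    using t0_pos by (intro prod.cong refl) (simp add: q_def q_free_def nn_integral_heat_kernel)
  also have "\<dots> = (\<integral>\<^sup>+z. q_free j0 z * indicator {U<..} z \<partial>lborel)"
    using j0 by (simp add: prod.delta)
  also have "\<dots> \<le> ennreal (sqrt 2 * exp (- ((U - am j0) ^ 2) / (4 * t0)))"
    unfolding q_free_def using t0_pos R_nonneg by (intro nn_integral_heat_kernel_tail) (auto simp: U_def)
  also have "ennreal (sqrt 2 * exp (- ((U - am j0) ^ 2) / (4 * t0))) = ennreal (sqrt 2 * exp (- (R ^ 2) / 4))"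
    unfolding U_def using t0_pos by (simp add: power_mult_distrib)
  finally show ?thesis .
qed

lemma mass_overshoot_exit_le:
  assumes j0: "j0 \<in> {1..k}"
  shows "mass (overshoot_exit j0) \<le> ennreal (sqrt 2 * exp (- (R ^ 2) / 4))"
proof -
  have exit_small: "exit_weight y \<le> exp (- (R ^ 2) / 2)" if "y \<in> overshoot_exit j0" for y
  proof -
    have "exit_weight y = exit_factor j0 y * (\<Prod>j\<in>{1..k} - {j0}. exit_factor j y)"
      unfolding exit_weight_def using j0 by (simp add: prod.remove)
    also have "\<dots> \<le> exit_factor j0 y"
      using exit_factor_nonneg exit_factor_le_1 by (intro mult_right_le_one_le prod_le_1 prod_nonneg) auto
    also have "\<dots> \<le> exp (- ((ap j0 - y (j0, ts ! (n - 1))) ^ 2) / (2 * tn))"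
      unfolding exit_factor_def using tn_ge_1 by (rule heat_kernel_le_exp)
    also have "\<dots> \<le> exp (- (R ^ 2) / 2)"
    proof -
      have "R * sqrt tn \<le> \<bar>ap j0 - y (j0, ts ! (n - 1))\<bar>"
        using that unfolding overshoot_exit_def by auto
      then have "(R * sqrt tn) ^ 2 \<le> \<bar>ap j0 - y (j0, ts ! (n - 1))\<bar> ^ 2"
        using R_nonneg tn_pos by (intro power_mono) auto
      then have "(R * sqrt tn) ^ 2 \<le> (ap j0 - y (j0, ts ! (n - 1))) ^ 2" by simp
      then show ?thesis using tn_pos by (simp add: power_mult_distrib field_simps)
    qed
    finally show ?thesis .
  qed
  have "ennreal (weight y) * indicator (overshoot_exit j0) y \<le> ennreal (open_weight y) * ennreal (exp (- (R ^ 2) / 2))" for y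
    using exit_small[of y] open_weight_nonneg[of y] exit_weight_nonneg[of y]
    by (auto simp: weight_split ennreal_mult[symmetric] intro!: ennreal_leI mult_left_mono split: split_indicator)
  then have "mass (overshoot_exit j0) \<le> (\<integral>\<^sup>+y. ennreal (open_weight y) * ennreal (exp (- (R ^ 2) / 2)) \<partial>M)"
    unfolding mass_def by (intro nn_integral_mono)
  also have "\<dots> = (\<integral>\<^sup>+y. ennreal (open_weight y) \<partial>M) * ennreal (exp (- (R ^ 2) / 2))"
    using measurable_open_weight by (intro nn_integral_multc) auto
  also have "\<dots> \<le> ennreal (exp (- (R ^ 2) / 4))"
    using nn_integral_open_weight_le_1 by (auto intro: order_trans[OF mult_right_mono] ennreal_leI)
  also have "\<dots> \<le> ennreal (sqrt 2 * exp (- (R ^ 2) / 4))"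
    by (intro ennreal_leI) simp
  finally show ?thesis .
qed

lemma indicator_W_le:
  "indicator (W_event k g S) y
     \<le> (indicator W_no_overshoot y :: ennreal) + (\<Sum>j\<in>{1..k}. indicator (overshoot_entry j) y + indicator (overshoot_exit j) y)"
proof (cases "y \<in> W_event k g S \<and> y \<notin> W_no_overshoot")
  case True
  then obtain j where "j \<in> {1..k}" "y \<in> overshoot_entry j \<or> y \<in> overshoot_exit j"
    unfolding W_no_overshoot_def overshoot_entry_def overshoot_exit_def by (auto simp: not_le)
  then have "1 \<le> (\<Sum>j\<in>{1..k}. indicator (overshoot_entry j) y + indicator (overshoot_exit j) y :: ennreal)"
    by (intro order_trans[OF _ member_le_sum]) (auto split: split_indicator)
  then show ?thesis using True by (simp add: add_increasing)
qed (auto simp: W_no_overshoot_def split: split_indicator)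

lemma mass_W_le:
  "mass (W_event k g S) \<le> mass W_no_overshoot + ennreal (2 * real k * (sqrt 2 * exp (- (R ^ 2) / 4)))"
proof -
  let ?f = "\<lambda>X y. ennreal (weight y) * indicator X y"
  have meas: "?f W_no_overshoot \<in> borel_measurable M" "\<And>j. j \<in> {1..k} \<Longrightarrow> ?f (overshoot_entry j) \<in> borel_measurable M"
    "\<And>j. j \<in> {1..k} \<Longrightarrow> ?f (overshoot_exit j) \<in> borel_measurable M"
    using pred_W_no_overshoot pred_overshoot by (auto intro: measurable_weight_indicator)
  have "mass (W_event k g S) \<le> (\<integral>\<^sup>+y. ?f W_no_overshoot y + (\<Sum>j\<in>{1..k}. ?f (overshoot_entry j) y + ?f (overshoot_exit j) y) \<partial>M)"
    unfolding mass_def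
  proof (intro nn_integral_mono)
    fix y
    have "?f (W_event k g S) y \<le> ennreal (weight y) * (indicator W_no_overshoot y
        + (\<Sum>j\<in>{1..k}. indicator (overshoot_entry j) y + indicator (overshoot_exit j) y))"
      by (intro mult_left_mono indicator_W_le) simp
    then show "?f (W_event k g S) y \<le> ?f W_no_overshoot y + (\<Sum>j\<in>{1..k}. ?f (overshoot_entry j) y + ?f (overshoot_exit j) y)"
      by (simp only: distrib_left sum_distrib_left)
  qed
  also have "\<dots> = mass W_no_overshoot + (\<integral>\<^sup>+y. (\<Sum>j\<in>{1..k}. ?f (overshoot_entry j) y + ?f (overshoot_exit j) y) \<partial>M)"
    unfolding mass_def using meas by (intro nn_integral_add borel_measurable_sum borel_measurable_add) auto
  also have "\<dots> = mass W_no_overshoot + (\<Sum>j\<in>{1..k}. mass (overshoot_entry j) + mass (overshoot_exit j))"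
    unfolding mass_def using meas by (subst nn_integral_sum) (auto intro!: sum.cong nn_integral_add)
  also have "\<dots> \<le> mass W_no_overshoot + (\<Sum>j\<in>{1..k}. ennreal (sqrt 2 * exp (- (R ^ 2) / 4)) + ennreal (sqrt 2 * exp (- (R ^ 2) / 4)))"
    using mass_overshoot_entry_le mass_overshoot_exit_le by (intro add_left_mono sum_mono add_mono) auto
  also have "\<dots> = mass W_no_overshoot + ennreal (2 * real k * (sqrt 2 * exp (- (R ^ 2) / 4)))"
    by (simp add: ennreal_plus[symmetric] ennreal_of_nat_eq_real_of_nat ennreal_mult[symmetric] del: ennreal_plus)
  finally show ?thesis .
qed

text \<open>The overshoot radius is chosen so that overshoots carry at most half of the lower
  bound for the mass of W.\<close>
lemma overshoot_small: "2 * real k * (sqrt 2 * exp (- (R ^ 2) / 4)) \<le> exp (- (W_exponent * sT ^ 14)) / 2"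
proof -
  obtain s where s: "s \<ge> 1" "sT = s" by (rule quarter_root_T)
  have R2: "R ^ 2 / 4 = (W_exponent + 6 * real k) * s ^ 14"
    unfolding R_def overshoot_radius_def s(2) using W_exponent_nonneg
    by (simp add: power_mult_distrib power_mult[symmetric])
  have "sqrt 2 \<le> (3/2::real)" by (rule real_le_lsqrt) (auto simp: power2_eq_square)
  then have "4 * sqrt 2 * real k \<le> 4 * (3/2) * real k" by (intro mult_right_mono mult_left_mono) auto
  also have "\<dots> = 6 * real k" by simp
  also have "\<dots> \<le> 6 * real k * s ^ 14"
    using one_le_power[OF s(1), of 14] by (simp add: mult_le_cancel_left1)
  also have "\<dots> \<le> exp (6 * real k * s ^ 14)"
    using exp_ge_add_one_self[of "6 * real k * s ^ 14"] by linarith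
  finally have half: "2 * real k * sqrt 2 * exp (- (6 * real k * s ^ 14)) \<le> 1 / 2"
    by (simp add: exp_minus field_simps)
  then have "2 * real k * sqrt 2 * exp (- (6 * real k * s ^ 14)) * exp (- (W_exponent * s ^ 14))
      \<le> exp (- (W_exponent * s ^ 14)) / 2"
    using mult_right_mono[OF half, of "exp (- (W_exponent * s ^ 14))"] by simp
  then show ?thesis
    unfolding minus_divide_left[symmetric] R2 s(2) by (simp add: mult_exp_exp algebra_simps)
qed

lemma mass_W_no_overshoot_ge: "ennreal (1/2) * mass (W_event k g S) \<le> mass W_no_overshoot"
proof -
  have finite_mass: "mass X = ennreal (enn2real (mass X))" for X
  proof -
    have "mass X < \<top>" using mass_le_1[of X] ennreal_one_less_top by (rule order_le_less_trans)
    then show ?thesis by simp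
  qed
  define d a where "d = enn2real (mass (W_event k g S))" and "a = enn2real (mass W_no_overshoot)"
  have d: "mass (W_event k g S) = ennreal d" "d \<ge> 0" and a: "mass W_no_overshoot = ennreal a" "a \<ge> 0"
    unfolding d_def a_def using finite_mass by auto
  have "d \<le> a + 2 * real k * (sqrt 2 * exp (- (R ^ 2) / 4))"
    using mass_W_le d a by (simp add: ennreal_plus[symmetric] del: ennreal_plus)
  moreover have "exp (- (W_exponent * sT ^ 14)) \<le> d" using mass_W_ge d by (simp add: ennreal_le_iff)
  ultimately have "1/2 * d \<le> a" using overshoot_small by linarith
  then have "ennreal (1/2 * d) \<le> ennreal a" by (rule ennreal_leI)
  then show ?thesis unfolding d(1) a(1) using d(2) by (subst ennreal_mult[symmetric]) auto
qed

subsection \<open>Lifting the curves\<close>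

definition "shift_height j = lam1 * T + (real k - real j) * lam0 * sqrt T"
definition "lift y = restrict (\<lambda>i. y i + shift_height (fst i)) I"
definition "lower y = restrict (\<lambda>i. y i + - shift_height (fst i)) I"

lemma shift_height_bounds:
  assumes "j \<in> {1..k}"
  shows "0 \<le> shift_height j" "shift_height j \<le> max_shift * sT ^ 4"
proof -
  obtain s where s: "T = s ^ 4" "sT = s" by (rule quarter_root_T)
  have kj: "0 \<le> real k - real j" "real k - real j \<le> real k" using assms by auto
  then show "0 \<le> shift_height j"
    unfolding shift_height_def using lam0 lam1 T_pos by simp
  have "(real k - real j) * lam0 * sqrt T \<le> real k * lam0 * T"
    using kj lam0 sqrt_T_le sqrt_T_ge_1 by (intro mult_mono) auto
  then show "shift_height j \<le> max_shift * sT ^ 4"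
    unfolding shift_height_def max_shift_def s(2) s(1)[symmetric] by (simp add: algebra_simps)
qed

lemma lift_coord: "(j, p) \<in> I \<Longrightarrow> lift y (j, p) = y (j, p) + shift_height j"
  unfolding lift_def by simp

lemma lower_coord: "(j, p) \<in> I \<Longrightarrow> lower y (j, p) = y (j, p) - shift_height j"
  unfolding lower_def by simp

lemma inner_factor_lift: "j \<in> {1..k} \<Longrightarrow> inner_factor j (lift y) = inner_factor j y"
  unfolding inner_factor_def using lift_coord in_I by (intro prod.cong refl) auto

text \<open>A constant lift leaves the increments between observation times unchanged, so only
  the entry and exit factors change.\<close>
lemma curve_weight_lift_ge:
  assumes j: "j \<in> {1..k}" and y: "y \<in> W_no_overshoot"
  shows "exp (- (2 * ((overshoot_radius * max_shift + max_shift ^ 2 / 2) * sT ^ 10))) * curve_weight j y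
       \<le> curve_weight j (lift y)"
proof -
  obtain s where s: "s \<ge> 1" "sqrt T = s ^ 2" "sT = s" by (rule quarter_root_T)
  let ?e = "exp (- ((overshoot_radius * max_shift + max_shift ^ 2 / 2) * s ^ 10))"
  have "y (j, ts ! 0) \<le> am j + R * sqrt t0 \<and> y (j, ts ! (n - 1)) \<le> ap j + R * sqrt tn"
    using y j unfolding W_no_overshoot_def by blast
  then have ends: "y (j, ts ! 0) - am j \<le> overshoot_radius * s ^ 7 * sqrt t0"
    "y (j, ts ! (n - 1)) - ap j \<le> overshoot_radius * s ^ 7 * sqrt tn"
    unfolding R_def s(3) by auto
  have h: "0 \<le> shift_height j" "shift_height j \<le> max_shift * s ^ 4"
    using shift_height_bounds[OF j] s(3) by auto
  have "?e * entry_factor j y \<le> entry_factor j (lift y)"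
    using heat_kernel_shift_ge[OF s(1) _ ends(1) h overshoot_radius_nonneg] t0_bounds s(2) lift_coord in_I[OF j] n_ge_1
    unfolding entry_factor_def by (simp add: algebra_simps)
  moreover have "?e * exit_factor j y \<le> exit_factor j (lift y)"
    using heat_kernel_shift_ge[OF s(1) _ ends(2) h overshoot_radius_nonneg] tn_bounds s(2) lift_coord in_I[OF j] n_ge_1
    unfolding exit_factor_def heat_kernel_minus[of _ "ap j - _", symmetric] by (simp add: algebra_simps)
  ultimately have "?e * entry_factor j y * inner_factor j y * (?e * exit_factor j y)
      \<le> entry_factor j (lift y) * inner_factor j (lift y) * exit_factor j (lift y)"
    unfolding inner_factor_lift[OF j] using inner_factor_nonneg entry_factor_nonneg exit_factor_nonneg
    by (intro mult_mono) (auto intro!: mult_nonneg_nonneg)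
  moreover have "exp (- (2 * ((overshoot_radius * max_shift + max_shift ^ 2 / 2) * s ^ 10))) = ?e * ?e"
    unfolding mult_exp_exp by simp
  ultimately show ?thesis
    unfolding curve_weight_split s(3) by (simp add: mult_ac)
qed

lemma weight_lift_ge:
  assumes "y \<in> W_no_overshoot"
  shows "exp (- (shift_cost * sT ^ 10)) * weight y \<le> weight (lift y)"
proof -
  let ?e = "exp (- (2 * ((overshoot_radius * max_shift + max_shift ^ 2 / 2) * sT ^ 10)))"
  have "exp (- (shift_cost * sT ^ 10)) = ?e ^ k"
    unfolding shift_cost_def by (simp add: exp_of_nat_mult[symmetric] algebra_simps)
  then have "exp (- (shift_cost * sT ^ 10)) * weight y = (\<Prod>j\<in>{1..k}. ?e * curve_weight j y)"
    unfolding weight_def prod.distrib by simp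
  also have "\<dots> \<le> weight (lift y)"
    unfolding weight_def using curve_weight_lift_ge[OF _ assms] curve_weight_split
    by (intro prod_mono) (auto intro!: mult_nonneg_nonneg entry_factor_nonneg inner_factor_nonneg exit_factor_nonneg)
  finally show ?thesis .
qed

text \<open>The lift adds exactly lam1 T to the gap above g and lam0 sqrt T to each gap between
  consecutive curves.\<close>
lemma lower_in_W_no_overshoot_imp_GW:
  assumes y: "lower y \<in> W_no_overshoot" and mu: "mu \<le> 1"
  shows "y \<in> G_event k mu lam0 lam1 T g S \<inter> W_event k g S"
proof -
  have W: "lower y \<in> W_event k g S" using y unfolding W_no_overshoot_def by simp
  have gap_k: "y (k, p) - g p > lam1 * T" if "p \<in> S" for p
    using W that k lower_coord[of k p y] unfolding W_event_def I_def shift_height_def by auto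
  have gap_j: "y (j, p) - y (j+1, p) > lam0 * sqrt T" if "p \<in> S" "j \<in> {1..k-1}" for p j
  proof -
    have "lower y (j+1, p) < lower y (j, p)" using W that unfolding W_event_def by auto
    moreover have "(j, p) \<in> I" "(j+1, p) \<in> I" using that unfolding I_def by auto
    ultimately show ?thesis using lower_coord unfolding shift_height_def by (simp add: algebra_simps)
  qed
  have "(1 + mu) / 2 * (lam1 * T) \<le> lam1 * T" "(1 + mu) / 2 * (lam0 * sqrt T) \<le> lam0 * sqrt T"
    using mu lam0 lam1 T_pos by (auto intro!: mult_left_le_one_le)
  moreover have "0 < lam1 * T" "0 < lam0 * sqrt T" using lam0 lam1 T_pos by auto
  ultimately show ?thesis
    unfolding W_event_def G_event_def using gap_k gap_j by (fastforce simp: mult.assoc)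
qed

lemma mass_GW_ge:
  assumes "mu \<le> 1"
  shows "ennreal (exp (- (shift_cost * sT ^ 10))) * mass W_no_overshoot \<le> mass (G_event k mu lam0 lam1 T g S \<inter> W_event k g S)"
proof -
  let ?c = "ennreal (exp (- (shift_cost * sT ^ 10)))"
  define F where "F y = ennreal (weight y) * indicator W_no_overshoot (lower y)" for y
  have lower_meas: "lower \<in> measurable M M" unfolding lower_def[abs_def] M_def by (rule measurable_restrict) simp
  have "(indicator W_no_overshoot :: _ \<Rightarrow> ennreal) \<in> borel_measurable M"
    using pred_W_no_overshoot by (simp add: pred_def borel_measurable_indicator_iff)
  then have "(\<lambda>y. indicator W_no_overshoot (lower y) :: ennreal) \<in> borel_measurable M"
    using measurable_comp[OF lower_meas] by (simp add: comp_def)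
  then have F_meas: "F \<in> borel_measurable M"
    unfolding F_def[abs_def] by (intro borel_measurable_times_ennreal) auto
  have "?c * mass W_no_overshoot = (\<integral>\<^sup>+y. ?c * (ennreal (weight y) * indicator W_no_overshoot y) \<partial>M)"
    unfolding mass_def using measurable_weight_indicator[OF pred_W_no_overshoot] by (rule nn_integral_cmult[symmetric])
  also have "\<dots> \<le> (\<integral>\<^sup>+y. F (lift y) \<partial>M)"
  proof (intro nn_integral_mono)
    fix y assume "y \<in> space M"
    then have "lower (lift y) = y"
      by (auto simp: lower_def lift_def M_def space_PiM PiE_def extensional_def fun_eq_iff)
    then show "?c * (ennreal (weight y) * indicator W_no_overshoot y) \<le> F (lift y)"
      unfolding F_def using weight_lift_ge weight_nonneg
      by (auto simp: ennreal_mult[symmetric] intro!: ennreal_leI split: split_indicator)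
  qed
  also have "\<dots> = (\<integral>\<^sup>+y. F y \<partial>M)"
    unfolding lift_def M_def using nn_integral_PiM_lborel_translate[OF finite_I F_meas[unfolded M_def]] by simp
  also have "\<dots> \<le> mass (G_event k mu lam0 lam1 T g S \<inter> W_event k g S)"
    unfolding mass_def F_def using lower_in_W_no_overshoot_imp_GW[OF _ assms]
    by (intro nn_integral_mono) (auto split: split_indicator)
  finally show ?thesis .
qed

definition "normaliser = (\<Prod>j\<in>{1..k}. heat_kernel (r - l) (ap j - am j))"

lemma normaliser_pos: "normaliser > 0"
  unfolding normaliser_def heat_kernel_def using lr by (intro prod_pos) auto

lemma P_free_eq_mass:
  assumes "Measurable.pred M (\<lambda>y. y \<in> X)"
  shows "P_free k l r am ap S X = ennreal (1 / normaliser) * mass X"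
proof -
  have "ennreal (free_dens k l r am ap S y) = ennreal (1 / normaliser) * ennreal (weight y)" for y
    using normaliser_pos weight_nonneg[of y]
    unfolding free_dens_def bridge_dens_def weight_def curve_weight_def normaliser_def ts_def[symmetric] prod_dividef
    by (simp add: ennreal_mult[symmetric] field_simps)
  then have "P_free k l r am ap S X = (\<integral>\<^sup>+y. ennreal (1 / normaliser) * (ennreal (weight y) * indicator X y) \<partial>M)"
    unfolding P_free_def config_space_eq by (simp add: mult.assoc)
  also have "\<dots> = ennreal (1 / normaliser) * mass X"
    unfolding mass_def using measurable_weight_indicator[OF assms] by (rule nn_integral_cmult)
  finally show ?thesis .
qed

lemma P_cond_G_ge:
  assumes "mu \<le> 1"
  shows "ennreal (1/2 * exp (- (shift_cost * sT ^ 10))) \<le> P_cond k l r am ap g S (G_event k mu lam0 lam1 T g S)"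
proof -
  let ?GW = "G_event k mu lam0 lam1 T g S \<inter> W_event k g S" and ?W = "W_event k g S"
  let ?c = "ennreal (1 / normaliser)"
  have c: "?c \<noteq> 0" "?c \<noteq> \<top>" using normaliser_pos by auto
  have "P_cond k l r am ap g S (G_event k mu lam0 lam1 T g S) = (mass ?GW * ?c) / (mass ?W * ?c)"
    unfolding P_cond_def using pred_G pred_W by (simp add: P_free_eq_mass mult.commute)
  also have "\<dots> = mass ?GW / mass ?W" using c by (intro divide_mult_eq) (auto simp: infinity_ennreal_def)
  finally have P_cond_eq: "P_cond k l r am ap g S (G_event k mu lam0 lam1 T g S) = mass ?GW / mass ?W" .
  have W_pos: "mass ?W \<noteq> 0" using mass_W_ge by (metis exp_gt_zero ennreal_eq_0_iff not_le order_antisym zero_le)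
  have W_fin: "mass ?W < \<top>" using mass_le_1[of ?W] ennreal_one_less_top by (rule order_le_less_trans)
  have "ennreal (1/2 * exp (- (shift_cost * sT ^ 10))) * mass ?W
      = ennreal (exp (- (shift_cost * sT ^ 10))) * (ennreal (1/2) * mass ?W)"
  proof -
    have "ennreal (1/2 * exp (- (shift_cost * sT ^ 10))) = ennreal (1/2) * ennreal (exp (- (shift_cost * sT ^ 10)))"
      by (rule ennreal_mult) auto
    then show ?thesis by (simp only: mult_ac)
  qed
  also have "\<dots> \<le> ennreal (exp (- (shift_cost * sT ^ 10))) * mass W_no_overshoot"
    using mass_W_no_overshoot_ge by (intro mult_left_mono) auto
  also have "\<dots> \<le> mass ?GW" using mass_GW_ge[OF assms] .
  finally show ?thesis
    unfolding P_cond_eq using divide_less_ennreal[OF W_pos W_fin] by (simp add: not_less[symmetric])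
qed

lemma P_cond_G_lower_bound:
  assumes "mu \<le> 1"
  shows "ennreal (inverse (2 + shift_cost) * exp (- (2 + shift_cost) * T powr (5/2)))
       \<le> P_cond k l r am ap g (P \<inter> {l + sqrt T .. r - sqrt T})
           (G_event k mu lam0 lam1 T g (P \<inter> {l + sqrt T .. r - sqrt T}))"
proof -
  obtain s where s: "s \<ge> 1" "T powr (5/2) = s ^ 10" "sT = s" by (rule quarter_root_T)
  have "inverse (2 + shift_cost) * exp (- (2 + shift_cost) * T powr (5/2))
      \<le> 1/2 * exp (- (shift_cost * sT ^ 10))"
    unfolding s(2,3) using shift_cost_nonneg s(1) by (intro inverse_mult_exp_le) auto
  then show ?thesis
    using P_cond_G_ge[OF assms] unfolding S_def by (meson ennreal_leI order_trans)
qed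

end

theorem mainTheorem8:
  fixes k :: nat and b0 b1 b2 lam0 lam1 \<mu> :: real
  assumes "k \<ge> 1"
    and "b0 > 0" "b1 > 0" "b2 > 0" "lam0 > 0" "lam1 > 0"
    and "0 < \<mu>" "\<mu> < 1"
  shows "\<exists>C > 0. \<forall>T l r (am :: nat \<Rightarrow> real) (ap :: nat \<Rightarrow> real) (g :: real \<Rightarrow> real) (P :: real set).
     T \<ge> 10 \<and> l < r \<and> finite P \<and> P \<subseteq> {l<..<r}
     \<and> P \<inter> {l + sqrt T .. r - sqrt T} \<noteq> {}
     \<and> g l = 0 \<and> g r = 0
     \<and> r - l \<le> b0 * T \<and> real (card P) \<le> b0 * T
     \<and> (\<forall>x\<in>{l..r}. \<forall>y\<in>{l..r}. \<bar>g x - g y\<bar> \<le> b1 * T * \<bar>x - y\<bar>)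
     \<and> (\<forall>j\<in>{1..k-1}. am j - am (j+1) \<ge> lam0 * sqrt T \<and> ap j - ap (j+1) \<ge> lam0 * sqrt T)
     \<and> am k - g l \<ge> lam1 * T \<and> ap k - g r \<ge> lam1 * T
     \<and> am 1 - g l \<le> b2 * T ^ 2 \<and> ap 1 - g r \<le> b2 * T ^ 2
     \<longrightarrow> P_cond k l r am ap g (P \<inter> {l + sqrt T .. r - sqrt T})
            (G_event k \<mu> lam0 lam1 T g (P \<inter> {l + sqrt T .. r - sqrt T}))
         \<ge> ennreal (inverse C * exp (- C * T powr (5/2)))"
proof -
  interpret bridge_constants k b0 b1 b2 lam0 lam1
    using assms by unfold_locales
  have "0 < 2 + shift_cost" using shift_cost_nonneg by simp
  moreover note bridge_setting.P_cond_G_lower_bound[of k b0 b1 b2 lam0 lam1 _ _ _ _ _ _ _ \<mu>]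
  ultimately show ?thesis
    using bridge_constants_axioms assms(8)
    unfolding bridge_setting_def bridge_setting_axioms_def by (intro exI[of _ "2 + shift_cost"]) auto
qed

end
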